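(* Let $\mathcal{H}$ be a complex Hilbert space and let $A\in\mathcal{B}(\mathcal{H})$ be a hyponormal operator, i.e. $A^*A-AA^*\ge 0$. Define \[ \xi_{|A|}=\inf_{\|x\|=1}\left\{\frac{\langle(|A|-|A^*|)x,x\rangle}{\langle(|A|+|A^*|)x,x\rangle}\right\}. \] Then for all $1\le r\le 2$, \[ \omega^r(A)\le \frac{1}{2\left(1+\frac{\xi_{|A|}^2}{8}\right)^r}\left\||A|^r+|A^*|^r\right\|. \] In particular, \[ \omega(A)\le \frac{1}{2\left(1+\frac{\xi_{|A|}^2}{8}\right)}\left\||A|+|A^*|\right\| \quad\text{and}\quad \omega^2(A)\le \frac{1}{2\left(1+\frac{\xi_{|A|}^2}{8}\right)^2}\left\|A^*A+AA^*\right\|. \]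
   Context: $\mathcal{B}(\mathcal{H})$ denotes the algebra of bounded linear operators on $\mathcal{H}$; $|A|=(A^*A)^{1/2}$; $\omega(A)=\sup_{\|x\|=1}|\langle Ax,x\rangle|$ is the numerical radius and $\|\cdot\|$ the operator norm. *)

theory Defs
  imports "HOL-Analysis.Analysis" "HOL-Computational_Algebra.Polynomial"
begin

class complex_vector = real_vector +
  fixes scaleC :: "complex \<Rightarrow> 'a \<Rightarrow> 'a"
  assumes scaleC_add_right: "scaleC a (x + y) = scaleC a x + scaleC a y"
    and scaleC_add_left: "scaleC (a + b) x = scaleC a x + scaleC b x"
    and scaleC_scaleC: "scaleC a (scaleC b x) = scaleC (a * b) x"
    and scaleC_one: "scaleC 1 x = x"
    and scaleR_scaleC: "scaleR r x = scaleC (complex_of_real r) x"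

class complex_inner = complex_vector + real_normed_vector +
  fixes cinner :: "'a \<Rightarrow> 'a \<Rightarrow> complex"
  assumes cinner_commute: "cinner x y = cnj (cinner y x)"
    and cinner_add_left: "cinner (x + y) z = cinner x z + cinner y z"
    and cinner_scaleC_left: "cinner (scaleC c x) y = cnj c * cinner x y"
    and cinner_ge_zero: "0 \<le> Re (cinner x x)"
    and cinner_eq_zero_iff: "cinner x x = 0 \<longleftrightarrow> x = 0"
    and norm_eq_sqrt_cinner: "norm x = sqrt (Re (cinner x x))"

class chilbert_space = complex_inner + complete_space

definition bounded_clinear_op :: "('a::complex_inner \<Rightarrow> 'a) \<Rightarrow> bool" where
  "bounded_clinear_op A \<longleftrightarrow>
     (\<forall>x y. A (x + y) = A x + A y) \<and> (\<forall>c x. A (scaleC c x) = scaleC c (A x)) \<and>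
     (\<exists>K. \<forall>x. norm (A x) \<le> norm x * K)"

definition adj :: "('a::complex_inner \<Rightarrow> 'a) \<Rightarrow> ('a \<Rightarrow> 'a)" where
  "adj A = (THE B. \<forall>x y. cinner (A x) y = cinner x (B y))"

definition pos_op :: "('a::complex_inner \<Rightarrow> 'a) \<Rightarrow> bool" where
  "pos_op T \<longleftrightarrow> (\<forall>x. Im (cinner (T x) x) = 0 \<and> 0 \<le> Re (cinner (T x) x))"

definition hyponormal :: "('a::complex_inner \<Rightarrow> 'a) \<Rightarrow> bool" where
  "hyponormal A \<longleftrightarrow> pos_op (\<lambda>x. adj A (A x) - A (adj A x))"

definition op_poly :: "real poly \<Rightarrow> ('a::complex_inner \<Rightarrow> 'a) \<Rightarrow> ('a \<Rightarrow> 'a)" where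
  "op_poly p T = (\<lambda>x. \<Sum>i\<le>degree p. scaleR (coeff p i) ((T ^^ i) x))"

text \<open>Real power \<open>T^r\<close> (r > 0) of a positive operator T, via the continuous functional
  calculus: the norm limit of \<open>p_n(T)\<close> for every sequence of real polynomials \<open>p_n\<close>
  converging uniformly to \<open>t \<mapsto> t^r\<close> on \<open>[0, \<parallel>T\<parallel>]\<close> (which contains the spectrum of T).\<close>
definition opow :: "('a::complex_inner \<Rightarrow> 'a) \<Rightarrow> real \<Rightarrow> ('a \<Rightarrow> 'a)" where
  "opow T r = (THE S. bounded_clinear_op S \<and>
     (\<forall>p :: nat \<Rightarrow> real poly.
        uniform_limit {0..onorm T} (\<lambda>n t. poly (p n) t) (\<lambda>t. t powr r) sequentially \<longrightarrow>
        (\<lambda>n. onorm (\<lambda>x. op_poly (p n) T x - S x)) \<longlonglongrightarrow> 0))"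

definition absop :: "('a::complex_inner \<Rightarrow> 'a) \<Rightarrow> ('a \<Rightarrow> 'a)" where
  "absop A = opow (\<lambda>x. adj A (A x)) (1/2)"

text \<open>Numerical radius \<open>\<omega>(A) = sup_{\<parallel>x\<parallel>=1} |\<langle>Ax,x\<rangle>|\<close> (the 0 only matters for the trivial space,
  where it makes the supremum over the empty unit sphere equal to 0).\<close>
definition numrad :: "('a::complex_inner \<Rightarrow> 'a) \<Rightarrow> real" where
  "numrad A = Sup ({0} \<union> {cmod (cinner (A x) x) | x. norm x = 1})"

definition xi_abs :: "('a::complex_inner \<Rightarrow> 'a) \<Rightarrow> real" where
  "xi_abs A = Inf {Re (cinner (absop A x - absop (adj A) x) x) /
                   Re (cinner (absop A x + absop (adj A) x) x) | x.
                   norm x = 1 \<and> Re (cinner (absop A x + absop (adj A) x) x) \<noteq> 0}"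

end

theory Submission
  imports Defs "HOL-Computational_Algebra.Fundamental_Theorem_Algebra"
begin

text \<open>For a hyponormal operator \<open>\<parallel>A\<^sup>*x\<parallel> \<le> \<parallel>Ax\<parallel>\<close>, so a unit vector almost norming \<open>A\<^sup>*\<close> also
  almost norms \<open>A\<close>; such a vector is an approximate eigenvector of both \<open>A\<^sup>*A\<close> and \<open>AA\<^sup>*\<close> for the
  eigenvalue \<open>\<parallel>A\<parallel>\<^sup>2\<close>. The continuous functional calculus carries it over to a joint approximate
  eigenvector of \<open>|A|\<^sup>r\<close> and \<open>|A\<^sup>*|\<^sup>r\<close> for \<open>\<parallel>A\<parallel>\<^sup>r\<close>, whence \<open>\<parallel>|A|\<^sup>r + |A\<^sup>*|\<^sup>r\<parallel> \<ge> 2\<parallel>A\<parallel>\<^sup>r \<ge> 2\<omega>(A)\<^sup>r\<close>.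
  The same vectors show that \<open>\<xi>\<^bsub>|A|\<^esub> = 0\<close> whenever \<open>A \<noteq> 0\<close>: the quotients are nonnegative because
  \<open>|A\<^sup>*| \<le> |A|\<close> (Loewner--Heinz for the square root) and tend to 0 along them. So the corollary
  reduces to the inequalities just described.\<close>

section \<open>Complex inner product spaces\<close>

lemma scaleC_zero_right [simp]: "scaleC c 0 = 0"
proof -
  have "scaleC c 0 = scaleC c (0+0)" by simp
  also have "\<dots> = scaleC c 0 + scaleC c 0" by (rule scaleC_add_right)
  finally show ?thesis by simp
qed

lemma scaleC_zero_left [simp]: "scaleC 0 x = 0"
proof -
  have "scaleC 0 x = scaleC (0+0) x" by simp
  also have "\<dots> = scaleC 0 x + scaleC 0 x" by (rule scaleC_add_left)
  finally show ?thesis by simp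
qed

lemma scaleC_minus_right: "scaleC c (- x) = - scaleC c x"
proof -
  have "scaleC c (- x) + scaleC c x = 0" by (simp flip: scaleC_add_right)
  then show ?thesis by (simp add: eq_neg_iff_add_eq_0)
qed

lemma scaleC_diff_right: "scaleC c (x - y) = scaleC c x - scaleC c y"
  by (simp only: diff_conv_add_uminus scaleC_add_right scaleC_minus_right)

lemma scaleC_minus_left: "scaleC (- c) x = - scaleC c x"
proof -
  have "scaleC (- c) x + scaleC c x = 0" by (simp flip: scaleC_add_left)
  then show ?thesis by (simp add: eq_neg_iff_add_eq_0)
qed

lemma scaleC_of_real: "scaleC (complex_of_real r) x = scaleR r x"
  by (simp add: scaleR_scaleC)

lemma scaleC_sum_right: "scaleC c (sum f A) = (\<Sum>i\<in>A. scaleC c (f i))"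
  by (induction A rule: infinite_finite_induct) (auto simp: scaleC_add_right)

lemma cinner_add_right: "cinner z (x + y) = cinner z x + cinner z y"
  by (metis cinner_commute cinner_add_left complex_cnj_add)

lemma cinner_scaleC_right: "cinner x (scaleC c y) = c * cinner x y"
  by (metis cinner_commute cinner_scaleC_left complex_cnj_mult complex_cnj_cnj)

lemma cinner_zero_left [simp]: "cinner 0 y = 0"
proof -
  have "cinner 0 y = cinner (0+0) y" by simp
  also have "\<dots> = cinner 0 y + cinner 0 y" by (rule cinner_add_left)
  finally show ?thesis by simp
qed

lemma cinner_zero_right [simp]: "cinner y 0 = 0"
  by (metis cinner_commute cinner_zero_left complex_cnj_zero)

lemma cinner_minus_left: "cinner (- x) y = - cinner x y"
proof -
  have "cinner (- x) y + cinner x y = 0" by (simp flip: cinner_add_left)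
  then show ?thesis by (simp add: eq_neg_iff_add_eq_0)
qed

lemma cinner_minus_right: "cinner y (- x) = - cinner y x"
proof -
  have "cinner y (- x) + cinner y x = 0" by (simp flip: cinner_add_right)
  then show ?thesis by (simp add: eq_neg_iff_add_eq_0)
qed

lemma cinner_diff_left: "cinner (x - y) z = cinner x z - cinner y z"
  by (simp only: diff_conv_add_uminus cinner_add_left cinner_minus_left)

lemma cinner_diff_right: "cinner z (x - y) = cinner z x - cinner z y"
  by (simp only: diff_conv_add_uminus cinner_add_right cinner_minus_right)

lemma cinner_scaleR_left: "cinner (scaleR r x) y = complex_of_real r * cinner x y"
  by (simp add: scaleR_scaleC cinner_scaleC_left)

lemma cinner_scaleR_right: "cinner x (scaleR r y) = complex_of_real r * cinner x y"
  by (simp add: scaleR_scaleC cinner_scaleC_right)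

lemma cinner_self_Im [simp]: "Im (cinner x x) = 0"
  by (metis cinner_commute cnj.sel(2) equal_neg_zero)

lemma cinner_self_real: "cinner x x = complex_of_real (Re (cinner x x))"
  by (simp add: complex_eq_iff)

lemma norm_sq_cinner: "(norm x)\<^sup>2 = Re (cinner x x)"
  by (simp add: norm_eq_sqrt_cinner cinner_ge_zero)

lemma cinner_self_norm: "cinner x x = complex_of_real ((norm x)\<^sup>2)"
  by (simp add: norm_sq_cinner cinner_self_real[symmetric])

lemma norm_scaleC: "norm (scaleC c (x::'a::complex_inner)) = cmod c * norm x"
proof -
  have "(norm (scaleC c x))\<^sup>2 = Re (cnj c * c * cinner x x)"
    by (simp add: norm_sq_cinner cinner_scaleC_left cinner_scaleC_right mult.assoc)
  also have "\<dots> = (cmod c * norm x)\<^sup>2"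
  proof -
    have "cnj c * c = complex_of_real ((cmod c)\<^sup>2)" by (metis complex_norm_square mult.commute)
    then show ?thesis by (simp add: cinner_self_norm power_mult_distrib flip: of_real_mult)
  qed
  finally show ?thesis
    by (meson mult_nonneg_nonneg norm_ge_zero power2_eq_iff_nonneg)
qed

lemma Re_cinner_commute: "Re (cinner y x) = Re (cinner x y)"
  by (subst cinner_commute) simp

lemma norm_diff_sq: "(norm (a - b))\<^sup>2 = (norm a)\<^sup>2 - 2 * Re (cinner a b) + (norm b)\<^sup>2"
  by (simp add: norm_sq_cinner cinner_diff_left cinner_diff_right Re_cinner_commute[of a b])

lemma norm_add_sq: "(norm (a + b))\<^sup>2 = (norm a)\<^sup>2 + 2 * Re (cinner a b) + (norm b)\<^sup>2"
  by (simp add: norm_sq_cinner cinner_add_left cinner_add_right Re_cinner_commute[of a b])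

lemma cmod_cinner_le: "cmod (cinner x y) \<le> norm x * norm y"
proof (cases "y = 0")
  case True then show ?thesis by simp
next
  case False
  define N where "N = (norm y)\<^sup>2"
  have N: "N > 0" using False by (simp add: N_def)
  define t where "t = cinner y x / complex_of_real N"
  have cy: "cinner y y = complex_of_real N" by (simp add: N_def cinner_self_norm)
  have cxy: "cinner y x = cnj (cinner x y)" by (rule cinner_commute)
  have "0 \<le> Re (cinner (x - scaleC t y) (x - scaleC t y))" by (rule cinner_ge_zero)
  also have "cinner (x - scaleC t y) (x - scaleC t y) =
      cinner x x - t * cinner x y - cnj t * cinner y x + cnj t * t * cinner y y"
    by (simp add: cinner_diff_left cinner_diff_right cinner_scaleC_left cinner_scaleC_right
        algebra_simps)
  also have "\<dots> = cinner x x - cnj (cinner x y) * cinner x y / complex_of_real N"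
    using N by (simp add: t_def cy cxy field_simps)
  also have "cnj (cinner x y) * cinner x y = complex_of_real ((cmod (cinner x y))\<^sup>2)"
    by (simp add: complex_norm_square mult.commute del: of_real_power)
  finally have "(cmod (cinner x y))\<^sup>2 / N \<le> (norm x)\<^sup>2"
    by (simp add: norm_sq_cinner)
  then have "(cmod (cinner x y))\<^sup>2 \<le> (norm x)\<^sup>2 * (norm y)\<^sup>2"
    using N by (simp add: N_def divide_le_eq)
  then show ?thesis
    using power2_le_imp_le[of "cmod (cinner x y)" "norm x * norm y"] by (simp add: power_mult_distrib)
qed

lemma abs_Re_cinner_le: "\<bar>Re (cinner x y)\<bar> \<le> norm x * norm y"
  using abs_Re_le_cmod cmod_cinner_le order_trans by blast

lemma abs_Re_cinner_le_sq:
  assumes "norm y \<le> w * norm x"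
  shows "\<bar>Re (cinner y x)\<bar> \<le> w * (norm x)\<^sup>2"
proof -
  have "\<bar>Re (cinner y x)\<bar> \<le> norm y * norm x" by (rule abs_Re_cinner_le)
  also have "\<dots> \<le> w * norm x * norm x" by (intro mult_right_mono assms) simp
  finally show ?thesis by (simp add: power2_eq_square mult.assoc)
qed

lemma Re_cinner_near_scaleR:
  assumes "norm x = 1" "norm (y - scaleR a x) \<le> e"
  shows "\<bar>Re (cinner y x) - a\<bar> \<le> e"
  using abs_Re_cinner_le[of "y - scaleR a x" x] assms
  by (simp add: cinner_diff_left cinner_scaleR_left norm_sq_cinner[symmetric])

lemma Re_cinner_add_diff: "Re (cinner (a + b) (a - b)) = (norm a)\<^sup>2 - (norm b)\<^sup>2"
  by (simp add: cinner_add_left cinner_diff_right norm_sq_cinner Re_cinner_commute[of a b])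

lemma norm_sub_sq_scaleR_le:
  fixes x y :: "'a::complex_inner"
  assumes x: "norm x = 1" and re: "Re (cinner y x) = g\<^sup>2" and y: "norm y \<le> a * g"
    and g: "0 \<le> g" "a - t \<le> g" "g \<le> a" and t: "0 \<le> t"
  shows "(norm (y - scaleR (a\<^sup>2) x))\<^sup>2 \<le> 2 * a ^ 3 * t"
proof -
  have a0: "0 \<le> a" using g by linarith
  have "(norm y)\<^sup>2 \<le> (a * g)\<^sup>2" using y by (intro power_mono) simp_all
  then have "(norm (y - scaleR (a\<^sup>2) x))\<^sup>2 \<le> a\<^sup>2 * g\<^sup>2 - 2 * (a\<^sup>2 * g\<^sup>2) + (a\<^sup>2)\<^sup>2"
    using x by (simp add: norm_diff_sq cinner_scaleR_right re power_mult_distrib)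
  also have "\<dots> = a\<^sup>2 * ((a - g) * (a + g))" by (simp add: power2_eq_square algebra_simps)
  also have "\<dots> \<le> a\<^sup>2 * (t * (2 * a))" using g t a0 by (intro mult_left_mono mult_mono) auto
  finally show ?thesis by (simp add: power2_eq_square power3_eq_cube mult_ac)
qed

lemma cinner_ext: "(\<And>x. cinner x y = cinner x z) \<Longrightarrow> y = z"
proof -
  assume "\<And>x. cinner x y = cinner x z"
  then have "cinner (y - z) (y - z) = 0" by (simp add: cinner_diff_right)
  then show "y = z" by (simp add: cinner_eq_zero_iff)
qed

section \<open>Bounded complex-linear operators\<close>

context
  fixes A :: "'a::complex_inner \<Rightarrow> 'a"
  assumes bA: "bounded_clinear_op A"
begin

lemma bounded_clinear_op_map_add: "A (x + y) = A x + A y"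
  using bA by (simp add: bounded_clinear_op_def)

lemma bounded_clinear_op_map_scaleC: "A (scaleC c x) = scaleC c (A x)"
  using bA by (simp add: bounded_clinear_op_def)

lemma bounded_clinear_op_map_scaleR: "A (scaleR r x) = scaleR r (A x)"
  by (simp add: scaleR_scaleC bounded_clinear_op_map_scaleC)

lemma bounded_clinear_op_bounded_linear: "bounded_linear A"
proof -
  obtain K where K: "\<And>x. norm (A x) \<le> norm x * K"
    using bA by (auto simp: bounded_clinear_op_def)
  show ?thesis
    by (rule bounded_linear_intro[OF bounded_clinear_op_map_add bounded_clinear_op_map_scaleR K])
qed

lemma bounded_clinear_op_map_zero [simp]: "A 0 = 0"
  using bounded_clinear_op_bounded_linear linear_simps(3)[of A] bounded_linear.linear by blast

lemma bounded_clinear_op_map_diff: "A (x - y) = A x - A y"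
  using bounded_clinear_op_bounded_linear by (simp add: linear_simps bounded_linear.linear)

lemma bounded_clinear_op_map_sum: "A (sum f S) = (\<Sum>i\<in>S. A (f i))"
  using bounded_clinear_op_bounded_linear by (simp add: linear_sum bounded_linear.linear)

lemma bounded_clinear_op_norm_le: "norm (A x) \<le> onorm A * norm x"
  by (rule onorm[OF bounded_clinear_op_bounded_linear])

lemma bounded_clinear_op_onorm_nonneg: "0 \<le> onorm A"
  by (rule onorm_pos_le[OF bounded_clinear_op_bounded_linear])

lemma bounded_clinear_op_unit_scale:
  assumes "x \<noteq> 0"
  obtains u where "norm u = 1" "x = scaleR (norm x) u" "A x = scaleR (norm x) (A u)"
proof
  define u where "u = scaleR (1 / norm x) x"
  show u: "norm u = 1" and xu: "x = scaleR (norm x) u" using assms by (simp_all add: u_def)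
  show "A x = scaleR (norm x) (A u)" by (subst xu) (rule bounded_clinear_op_map_scaleR)
qed

lemma bounded_clinear_op_norm_le_unit:
  assumes "\<And>u. norm u = 1 \<Longrightarrow> norm (A u) \<le> c"
  shows "norm (A x) \<le> c * norm x"
proof (cases "x = 0")
  case False
  then obtain u where u: "norm u = 1" "A x = scaleR (norm x) (A u)"
    by (rule bounded_clinear_op_unit_scale)
  have "norm x * norm (A u) \<le> norm x * c" using assms[OF u(1)] by (simp add: mult_left_mono)
  then show ?thesis using u(2) by (simp add: mult.commute)
qed simp

lemma bounded_clinear_op_almost_norming:
  assumes "0 \<le> c" "c < onorm A"
  obtains x where "norm x = 1" "c < norm (A x)"
proof -
  have "\<not> (\<forall>x. norm x = 1 \<longrightarrow> norm (A x) \<le> c)"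
    using onorm_bound[OF assms(1) bounded_clinear_op_norm_le_unit] assms(2) by force
  then show ?thesis using that by force
qed

end

lemma bounded_clinear_opI:
  fixes A :: "'a::complex_inner \<Rightarrow> 'a"
  assumes "\<And>x y. A (x + y) = A x + A y" "\<And>c x. A (scaleC c x) = scaleC c (A x)"
    "\<And>x. norm (A x) \<le> K * norm x"
  shows "bounded_clinear_op A"
  using assms unfolding bounded_clinear_op_def by (metis mult.commute)

lemma bounded_clinear_op_ident: "bounded_clinear_op (\<lambda>x::'a::complex_inner. x)"
  by (rule bounded_clinear_opI[where K=1]) auto

lemma bounded_clinear_op_zero: "bounded_clinear_op (\<lambda>x::'a::complex_inner. 0)"
  by (rule bounded_clinear_opI[where K=0]) auto

lemma bounded_clinear_op_compose:
  assumes "bounded_clinear_op A" "bounded_clinear_op B"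
  shows "bounded_clinear_op (\<lambda>x. A (B x))"
proof (rule bounded_clinear_opI[where K="onorm A * onorm B"])
  fix x
  have "norm (A (B x)) \<le> onorm A * norm (B x)" by (rule bounded_clinear_op_norm_le[OF assms(1)])
  also have "\<dots> \<le> onorm A * (onorm B * norm x)"
    by (rule mult_left_mono[OF bounded_clinear_op_norm_le[OF assms(2)] bounded_clinear_op_onorm_nonneg[OF assms(1)]])
  finally show "norm (A (B x)) \<le> onorm A * onorm B * norm x" by (simp add: mult.assoc)
qed (simp_all add: bounded_clinear_op_map_add[OF assms(1)] bounded_clinear_op_map_add[OF assms(2)]
      bounded_clinear_op_map_scaleC[OF assms(1)] bounded_clinear_op_map_scaleC[OF assms(2)])

lemma bounded_clinear_op_add:
  assumes "bounded_clinear_op A" "bounded_clinear_op B"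
  shows "bounded_clinear_op (\<lambda>x. A x + B x)"
proof (rule bounded_clinear_opI[where K="onorm A + onorm B"])
  fix x
  have "norm (A x + B x) \<le> norm (A x) + norm (B x)" by (rule norm_triangle_ineq)
  also have "\<dots> \<le> onorm A * norm x + onorm B * norm x"
    by (intro add_mono bounded_clinear_op_norm_le assms)
  finally show "norm (A x + B x) \<le> (onorm A + onorm B) * norm x" by (simp add: algebra_simps)
qed (simp_all add: bounded_clinear_op_map_add[OF assms(1)] bounded_clinear_op_map_add[OF assms(2)]
      bounded_clinear_op_map_scaleC[OF assms(1)] bounded_clinear_op_map_scaleC[OF assms(2)] scaleC_add_right)

lemma bounded_clinear_op_diff:
  assumes "bounded_clinear_op A" "bounded_clinear_op B"
  shows "bounded_clinear_op (\<lambda>x. A x - B x)"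
proof (rule bounded_clinear_opI[where K="onorm A + onorm B"])
  fix x
  have "norm (A x - B x) \<le> norm (A x) + norm (B x)" by (rule norm_triangle_ineq4)
  also have "\<dots> \<le> onorm A * norm x + onorm B * norm x"
    by (intro add_mono bounded_clinear_op_norm_le assms)
  finally show "norm (A x - B x) \<le> (onorm A + onorm B) * norm x" by (simp add: algebra_simps)
qed (simp_all add: bounded_clinear_op_map_add[OF assms(1)] bounded_clinear_op_map_add[OF assms(2)]
      bounded_clinear_op_map_scaleC[OF assms(1)] bounded_clinear_op_map_scaleC[OF assms(2)] scaleC_diff_right)

lemma bounded_clinear_op_scaleC:
  assumes "bounded_clinear_op A"
  shows "bounded_clinear_op (\<lambda>x. scaleC a (A x))"
proof (rule bounded_clinear_opI[where K="cmod a * onorm A"])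
  fix x
  have "norm (scaleC a (A x)) = cmod a * norm (A x)" by (simp add: norm_scaleC)
  also have "\<dots> \<le> cmod a * (onorm A * norm x)"
    by (intro mult_left_mono bounded_clinear_op_norm_le assms) simp
  finally show "norm (scaleC a (A x)) \<le> cmod a * onorm A * norm x" by (simp add: algebra_simps)
next
  fix c x show "scaleC a (A (scaleC c x)) = scaleC c (scaleC a (A x))"
    by (simp add: bounded_clinear_op_map_scaleC[OF assms] scaleC_scaleC mult.commute)
qed (simp_all add: bounded_clinear_op_map_add[OF assms(1)] scaleC_add_right)

lemma bounded_clinear_op_scaleR:
  assumes "bounded_clinear_op A"
  shows "bounded_clinear_op (\<lambda>x. scaleR r (A x))"
  using bounded_clinear_op_scaleC[OF assms, of "complex_of_real r"] by (simp add: scaleC_of_real)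

section \<open>Riesz representation and adjoints\<close>

lemma Cauchy_minimizing_midpoint_convex:
  fixes h :: "nat \<Rightarrow> 'a::complex_inner"
  assumes mid: "\<And>x y. x \<in> H \<Longrightarrow> y \<in> H \<Longrightarrow> scaleR (1/2) (x + y) \<in> H"
    and hH: "\<And>n. h n \<in> H" and d: "\<And>x. x \<in> H \<Longrightarrow> d \<le> norm x" "0 \<le> d"
    and hn: "\<And>n. (norm (h n))\<^sup>2 < d\<^sup>2 + 1 / Suc n"
  shows "Cauchy h"
proof (rule metric_CauchyI)
  have par: "(norm (x - y))\<^sup>2 \<le> 2 * (norm x)\<^sup>2 + 2 * (norm y)\<^sup>2 - 4 * d\<^sup>2"
    if "x \<in> H" "y \<in> H" for x y
  proof -
    have "2 * d \<le> norm (x + y)" using d(1)[OF mid[OF that]] by simp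
    then have "(2 * d)\<^sup>2 \<le> (norm (x + y))\<^sup>2" using d(2) by (intro power_mono) auto
    then show ?thesis by (simp add: norm_diff_sq norm_add_sq power_mult_distrib)
  qed
  fix e :: real assume e: "0 < e"
  obtain M where M: "4 / e\<^sup>2 < real M"
    using reals_Archimedean2 by blast
  show "\<exists>M. \<forall>m\<ge>M. \<forall>n\<ge>M. dist (h m) (h n) < e"
  proof (intro exI allI impI)
    fix m n assume mn: "M \<le> m" "M \<le> n"
    have "(norm (h m - h n))\<^sup>2 \<le> 2 * (norm (h m))\<^sup>2 + 2 * (norm (h n))\<^sup>2 - 4 * d\<^sup>2"
      by (rule par[OF hH hH])
    also have "\<dots> < 2 / Suc m + 2 / Suc n"
      using hn[of m] hn[of n] by simp
    also have "\<dots> \<le> 2 / Suc M + 2 / Suc M"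
      using mn by (intro add_mono divide_left_mono) auto
    also have "\<dots> < e\<^sup>2"
    proof -
      have "4 / e\<^sup>2 < Suc M" using M by simp
      then have "4 < e\<^sup>2 * Suc M" using e by (simp add: divide_less_eq mult.commute)
      then show ?thesis by (simp add: divide_less_eq mult.commute)
    qed
    finally show "dist (h m) (h n) < e"
      using e by (simp add: dist_norm power_less_imp_less_base)
  qed
qed

lemma Inf_norm_minimizing_seq:
  fixes H :: "'a::real_normed_vector set"
  assumes "H \<noteq> {}"
  obtains h where "\<And>n. h n \<in> H" "\<And>n. (norm (h n))\<^sup>2 < (Inf (norm ` H))\<^sup>2 + 1 / Suc n"
proof -
  define d where "d = Inf (norm ` H)"
  have d0: "0 \<le> d" unfolding d_def using assms by (intro cInf_greatest) auto
  have "\<exists>h. h \<in> H \<and> (norm h)\<^sup>2 < d\<^sup>2 + 1 / Suc n" for n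
  proof -
    have "d < sqrt (d\<^sup>2 + 1 / Suc n)" using d0 by (simp add: real_less_rsqrt)
    then obtain h where "h \<in> H" and hlt: "norm h < sqrt (d\<^sup>2 + 1 / Suc n)"
      unfolding d_def using cInf_lessD[of "norm ` H"] assms by blast
    have "(norm h)\<^sup>2 < (sqrt (d\<^sup>2 + 1 / Suc n))\<^sup>2"
      by (rule power_strict_mono[OF hlt]) auto
    then show ?thesis using \<open>h \<in> H\<close> by auto
  qed
  then have "\<forall>n. \<exists>h. h \<in> H \<and> (norm h)\<^sup>2 < d\<^sup>2 + 1 / Suc n" by blast
  from choice[OF this] obtain h where "\<forall>n. h n \<in> H \<and> (norm (h n))\<^sup>2 < d\<^sup>2 + 1 / Suc n" ..
  then show ?thesis using that unfolding d_def by blast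
qed

lemma min_norm_level_set_exists:
  fixes f :: "'a::chilbert_space \<Rightarrow> complex"
  assumes blf: "bounded_linear f" and u: "f u = 1"
  obtains v where "f v = 1" "\<And>x. f x = 1 \<Longrightarrow> norm v \<le> norm x"
proof -
  define H where "H = {x. f x = 1}"
  have fR: "f (scaleR r x) = complex_of_real r * f x" for r x
    using linear_scale[OF bounded_linear.linear[OF blf]] by (simp add: scaleR_conv_of_real)
  have mid: "scaleR (1/2) (x + y) \<in> H" if "x \<in> H" "y \<in> H" for x y
    using that by (simp add: H_def fR linear_add[OF bounded_linear.linear[OF blf]])
  define d where "d = Inf (norm ` H)"
  have bdd: "bdd_below (norm ` H)" by (intro bdd_belowI[of _ 0]) auto
  have d_le: "d \<le> norm x" if "x \<in> H" for x
    unfolding d_def using bdd that by (simp add: cInf_lower)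
  have d0: "0 \<le> d" unfolding d_def using u by (intro cInf_greatest) (auto simp: H_def)
  obtain h where hH: "\<And>n. h n \<in> H" and hn: "\<And>n. (norm (h n))\<^sup>2 < d\<^sup>2 + 1 / Suc n"
    using Inf_norm_minimizing_seq[of H] u unfolding d_def H_def by blast
  have "Cauchy h" by (rule Cauchy_minimizing_midpoint_convex[OF mid hH d_le d0 hn])
  then obtain v where hv: "h \<longlonglongrightarrow> v" using Cauchy_convergent_iff convergent_def by blast
  have "(\<lambda>n. f (h n)) \<longlonglongrightarrow> f v" by (rule bounded_linear.tendsto[OF blf hv])
  moreover have "(\<lambda>n. f (h n)) = (\<lambda>n. 1)" using hH by (simp add: H_def)
  ultimately have "(\<lambda>n. 1) \<longlonglongrightarrow> f v" by simp
  then have fv: "f v = 1" by (rule LIMSEQ_unique[OF tendsto_const, symmetric])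
  have "(norm v)\<^sup>2 \<le> d\<^sup>2"
  proof -
    have "(\<lambda>n. (norm (h n))\<^sup>2) \<longlonglongrightarrow> (norm v)\<^sup>2"
      by (intro tendsto_intros hv)
    moreover have "(\<lambda>n. d\<^sup>2 + 1 / Suc n) \<longlonglongrightarrow> d\<^sup>2 + 0"
      by (intro tendsto_intros LIMSEQ_inverse_real_of_nat[unfolded inverse_eq_divide])
    ultimately have "(norm v)\<^sup>2 \<le> d\<^sup>2 + 0"
      by (rule LIMSEQ_le) (use hn less_imp_le in blast)
    then show ?thesis by simp
  qed
  then have "norm v \<le> norm x" if "x \<in> H" for x
    using d_le[OF that] d0 by (meson norm_ge_zero order_trans power2_le_imp_le)
  then show ?thesis by (rule that[OF fv]) (simp add: H_def)
qed

lemma min_norm_level_set_orthogonal: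
  fixes f :: "'a::complex_inner \<Rightarrow> complex"
  assumes fadd: "\<And>x y. f (x + y) = f x + f y" and fsc: "\<And>c x. f (scaleC c x) = c * f x"
    and fv: "f v = 1" and vmin: "\<And>x. f x = 1 \<Longrightarrow> norm v \<le> norm x" and k: "f k = 0"
  shows "cinner v k = 0"
proof (rule ccontr)
  define a where "a = cinner v k"
  assume "cinner v k \<noteq> 0"
  then have a0: "a \<noteq> 0" by (simp add: a_def)
  define s where "s = 1 / ((norm k)\<^sup>2 + 1)"
  have den: "0 < (norm k)\<^sup>2 + 1" using zero_le_power2[of "norm k"] by linarith
  then have s0: "0 < s" by (simp add: s_def)
  have sk: "s * (norm k)\<^sup>2 < 1" using den by (simp add: s_def divide_less_eq)
  \<comment> \<open>moving from \<open>v\<close> towards \<open>k\<close> inside the level set would decrease the norm\<close>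
  define t where "t = - complex_of_real s * cnj a"
  have "norm v \<le> norm (v + scaleC t k)" using fv k by (intro vmin) (simp add: fadd fsc)
  then have "(norm v)\<^sup>2 \<le> (norm (v + scaleC t k))\<^sup>2" by (simp add: power_mono)
  also have "\<dots> = (norm v)\<^sup>2 + 2 * Re (t * a) + (cmod t * norm k)\<^sup>2"
    by (simp add: norm_add_sq cinner_scaleC_right norm_scaleC a_def)
  also have "t * a = - complex_of_real (s * (cmod a)\<^sup>2)"
  proof -
    have "cnj a * a = complex_of_real ((cmod a)\<^sup>2)" by (metis complex_norm_square mult.commute)
    then show ?thesis by (simp add: t_def mult.assoc)
  qed
  also have "cmod t = s * cmod a" using s0 by (simp add: t_def norm_mult)
  finally have "0 \<le> s * (cmod a)\<^sup>2 * (s * (norm k)\<^sup>2 - 2)"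
    by (simp add: power_mult_distrib algebra_simps power2_eq_square)
  moreover have "0 < s * (cmod a)\<^sup>2" using s0 a0 by simp
  ultimately have "0 \<le> s * (norm k)\<^sup>2 - 2" by (simp add: zero_le_mult_iff)
  with sk show False by simp
qed

lemma riesz_representation:
  fixes f :: "'a::chilbert_space \<Rightarrow> complex"
  assumes fadd: "\<And>x y. f (x + y) = f x + f y" and fsc: "\<And>c x. f (scaleC c x) = c * f x"
    and fb: "\<And>x. cmod (f x) \<le> K * norm x"
  obtains y where "\<And>x. f x = cinner y x"
proof (cases "\<forall>x. f x = 0")
  case True then show ?thesis using that[of 0] by simp
next
  case False
  then obtain u0 where u0: "f u0 \<noteq> 0" by blast
  have blf: "bounded_linear f"
    by (rule bounded_linear_intro[where K=K])
      (simp_all add: fadd scaleR_scaleC fsc scaleR_conv_of_real fb mult.commute)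
  have u: "f (scaleC (1 / f u0) u0) = 1" using u0 by (simp add: fsc)
  obtain v where fv: "f v = 1" and vmin: "\<And>x. f x = 1 \<Longrightarrow> norm v \<le> norm x"
    using min_norm_level_set_exists[OF blf u] by blast
  have v0: "v \<noteq> 0" using fv fsc[of 0 0] by auto
  define N where "N = (norm v)\<^sup>2"
  have N0: "0 < N" using v0 by (simp add: N_def)
  show ?thesis
  proof (rule that)
    fix x
    have "f (x - scaleC (f x) v) = 0"
      using fadd[of "x - scaleC (f x) v" "scaleC (f x) v"] by (simp add: fsc fv)
    then have "cinner v (x - scaleC (f x) v) = 0"
      using min_norm_level_set_orthogonal[OF fadd fsc fv] vmin by blast
    then have "cinner v x = f x * complex_of_real N"
      by (simp add: cinner_diff_right cinner_scaleC_right cinner_self_norm N_def)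
    then show "f x = cinner (scaleC (complex_of_real (1 / N)) v) x"
      using N0 by (simp add: cinner_scaleC_left field_simps)
  qed
qed

lemma adjoint_exists:
  fixes A :: "'a::chilbert_space \<Rightarrow> 'a"
  assumes bA: "bounded_clinear_op A"
  shows "\<exists>B. \<forall>x y. cinner (A x) y = cinner x (B y)"
proof -
  have "\<exists>z. \<forall>x. cinner (A x) y = cinner x z" for y
  proof -
    obtain z where "\<And>x. cinner y (A x) = cinner z x"
    proof (rule riesz_representation[where K="norm y * onorm A"])
      fix x
      have "cmod (cinner y (A x)) \<le> norm y * norm (A x)" by (rule cmod_cinner_le)
      also have "\<dots> \<le> norm y * (onorm A * norm x)"
        by (intro mult_left_mono bounded_clinear_op_norm_le[OF bA]) simp
      finally show "cmod (cinner y (A x)) \<le> norm y * onorm A * norm x" by (simp add: mult.assoc)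
    qed (simp_all add: bounded_clinear_op_map_add[OF bA] bounded_clinear_op_map_scaleC[OF bA]
        cinner_add_right cinner_scaleC_right)
    then show ?thesis by (metis cinner_commute)
  qed
  then show ?thesis by metis
qed

lemma adj_eqI:
  fixes A :: "'a::complex_inner \<Rightarrow> 'a"
  assumes "\<forall>x y. cinner (A x) y = cinner x (B y)"
  shows "adj A = B"
  unfolding adj_def
proof (rule the_equality)
  fix B' assume "\<forall>x y. cinner (A x) y = cinner x (B' y)"
  with assms have "\<And>y. B' y = B y" by (metis cinner_ext)
  then show "B' = B" by (rule ext)
qed (rule assms)

context
  fixes A :: "'a::chilbert_space \<Rightarrow> 'a"
  assumes bA: "bounded_clinear_op A"
begin

lemma cinner_adj_right: "cinner (A x) y = cinner x (adj A y)"
proof -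
  obtain B where B: "\<forall>x y. cinner (A x) y = cinner x (B y)" using adjoint_exists[OF bA] by blast
  then have "adj A = B" by (rule adj_eqI)
  with B show ?thesis by simp
qed

lemma cinner_adj_left: "cinner (adj A x) y = cinner x (A y)"
  by (metis cinner_adj_right cinner_commute)

lemma norm_adj_le: "norm (adj A y) \<le> onorm A * norm y"
proof -
  have "(norm (adj A y))\<^sup>2 = Re (cinner (A (adj A y)) y)"
    by (simp add: norm_sq_cinner cinner_adj_right)
  also have "\<dots> \<le> norm (A (adj A y)) * norm y"
    using abs_Re_cinner_le[of "A (adj A y)" y] by linarith
  also have "\<dots> \<le> onorm A * norm (adj A y) * norm y"
    by (intro mult_right_mono bounded_clinear_op_norm_le[OF bA]) simp
  finally have "norm (adj A y) * norm (adj A y) \<le> (onorm A * norm y) * norm (adj A y)"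
    by (simp add: power2_eq_square algebra_simps)
  then show ?thesis
    by (cases "norm (adj A y) = 0") (auto simp: mult_le_cancel_right bounded_clinear_op_onorm_nonneg[OF bA])
qed

lemma bounded_clinear_op_adj: "bounded_clinear_op (adj A)"
proof (rule bounded_clinear_opI[OF _ _ norm_adj_le])
  fix y z show "adj A (y + z) = adj A y + adj A z"
    by (rule cinner_ext) (simp add: cinner_adj_right[symmetric] cinner_add_right)
next
  fix c y show "adj A (scaleC c y) = scaleC c (adj A y)"
    by (rule cinner_ext) (simp add: cinner_adj_right[symmetric] cinner_scaleC_right)
qed

lemma adj_adj: "adj (adj A) = A"
  by (rule adj_eqI) (simp add: cinner_adj_left)

lemma onorm_adj_le: "onorm (adj A) \<le> onorm A"
  by (rule onorm_bound[OF bounded_clinear_op_onorm_nonneg[OF bA] norm_adj_le])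

end

lemma onorm_adj:
  fixes A :: "'a::chilbert_space \<Rightarrow> 'a"
  assumes bA: "bounded_clinear_op A"
  shows "onorm (adj A) = onorm A"
  using onorm_adj_le[OF bA] onorm_adj_le[OF bounded_clinear_op_adj[OF bA]] by (simp add: adj_adj[OF bA])

section \<open>Self-adjoint and positive operators\<close>

definition selfadjoint :: "('a::complex_inner \<Rightarrow> 'a) \<Rightarrow> bool" where
  "selfadjoint T \<longleftrightarrow> (\<forall>x y. cinner (T x) y = cinner x (T y))"

text \<open>Stronger than \<^const>\<open>pos_op\<close>: boundedness and self-adjointness are part of the notion.\<close>
definition positive_op :: "('a::complex_inner \<Rightarrow> 'a) \<Rightarrow> bool" where
  "positive_op T \<longleftrightarrow> bounded_clinear_op T \<and> selfadjoint T \<and> (\<forall>x. 0 \<le> Re (cinner (T x) x))"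

lemma positive_op_bounded: "positive_op T \<Longrightarrow> bounded_clinear_op T"
  by (simp add: positive_op_def)

lemma selfadjoint_quadratic_real:
  assumes "selfadjoint T"
  shows "cinner (T x) x = complex_of_real (Re (cinner (T x) x))"
proof -
  have "Im (cinner (T x) x) = 0"
    using assms unfolding selfadjoint_def by (metis cinner_commute cnj.sel(2) equal_neg_zero)
  then show ?thesis by (simp add: complex_eq_iff)
qed

lemma positive_op_norm_sq: "positive_op S \<Longrightarrow> (norm (S x))\<^sup>2 = Re (cinner (S (S x)) x)"
  by (simp add: norm_sq_cinner positive_op_def selfadjoint_def)

lemma quadratic_form_le_onorm:
  fixes T :: "'a::complex_inner \<Rightarrow> 'a"
  assumes "bounded_clinear_op T"
  shows "Re (cinner (T x) x) \<le> onorm T * (norm x)\<^sup>2"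
proof -
  have "Re (cinner (T x) x) \<le> norm (T x) * norm x" using abs_Re_cinner_le[of "T x" x] by linarith
  also have "\<dots> \<le> onorm T * norm x * norm x"
    by (intro mult_right_mono bounded_clinear_op_norm_le[OF assms]) simp
  finally show ?thesis by (simp add: power2_eq_square mult.assoc)
qed

lemma quadratic_form_scaleR:
  fixes Z :: "'a::complex_inner \<Rightarrow> 'a"
  assumes "bounded_clinear_op Z"
  shows "Re (cinner (Z (scaleR c x)) (scaleR c x)) = c\<^sup>2 * Re (cinner (Z x) x)"
  by (simp add: bounded_clinear_op_map_scaleR[OF assms] cinner_scaleR_left cinner_scaleR_right
      power2_eq_square)

lemma quadratic_form_adj_comp:
  fixes A :: "'a::chilbert_space \<Rightarrow> 'a"
  assumes "bounded_clinear_op A"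
  shows "Re (cinner (adj A (A x)) x) = (norm (A x))\<^sup>2"
  by (simp add: cinner_adj_left[OF assms] norm_sq_cinner)

lemma quadratic_form_comp_adj:
  fixes A :: "'a::chilbert_space \<Rightarrow> 'a"
  assumes "bounded_clinear_op A"
  shows "Re (cinner (A (adj A x)) x) = (norm (adj A x))\<^sup>2"
  using quadratic_form_adj_comp[OF bounded_clinear_op_adj[OF assms]] by (simp add: adj_adj[OF assms])

lemma positive_op_adj_comp:
  fixes A :: "'a::chilbert_space \<Rightarrow> 'a"
  assumes bA: "bounded_clinear_op A"
  shows "positive_op (\<lambda>x. adj A (A x))"
  unfolding positive_op_def selfadjoint_def
proof (intro conjI allI)
  fix x y
  show "cinner (adj A (A x)) y = cinner x (adj A (A y))"
    by (simp only: cinner_adj_left[OF bA] cinner_adj_right[OF bA])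
  show "0 \<le> Re (cinner (adj A (A x)) x)" by (simp add: quadratic_form_adj_comp[OF bA])
qed (rule bounded_clinear_op_compose[OF bounded_clinear_op_adj[OF bA] bA])

lemma positive_op_comp_adj:
  fixes A :: "'a::chilbert_space \<Rightarrow> 'a"
  assumes "bounded_clinear_op A"
  shows "positive_op (\<lambda>x. A (adj A x))"
  using positive_op_adj_comp[OF bounded_clinear_op_adj[OF assms]] by (simp add: adj_adj[OF assms])

section \<open>Polynomials in an operator\<close>

text \<open>Complex coefficients are needed to factor a real polynomial into linear factors.\<close>
definition op_cpoly :: "complex poly \<Rightarrow> ('a::complex_inner \<Rightarrow> 'a) \<Rightarrow> 'a \<Rightarrow> 'a" where
  "op_cpoly q T x = (\<Sum>i\<le>degree q. scaleC (coeff q i) ((T ^^ i) x))"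

lemma op_cpoly_eq_sum_atMost:
  assumes "degree q \<le> n"
  shows "op_cpoly q T x = (\<Sum>i\<le>n. scaleC (coeff q i) ((T ^^ i) x))"
  unfolding op_cpoly_def
proof (rule sum.mono_neutral_left)
  show "\<forall>i\<in>{..n} - {..degree q}. scaleC (coeff q i) ((T ^^ i) x) = 0"
    by (auto simp: coeff_eq_0)
qed (use assms in auto)

lemma degree_map_of_real [simp]: "degree (map_poly complex_of_real p) = degree p"
  by (rule degree_map_poly) simp

lemma op_poly_eq_op_cpoly: "op_poly p T x = op_cpoly (map_poly complex_of_real p) T x"
  by (simp add: op_poly_def op_cpoly_def coeff_map_poly scaleR_scaleC)

lemma map_poly_of_real_add:
  "map_poly complex_of_real (p + q) = map_poly complex_of_real p + map_poly complex_of_real q"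
  by (intro poly_eqI) (simp add: coeff_map_poly)

lemma map_poly_of_real_mult:
  "map_poly complex_of_real (p * q) = map_poly complex_of_real p * map_poly complex_of_real q"
proof (induction p)
  case (pCons a p)
  show ?case
    by (simp add: mult_pCons_left map_poly_of_real_add map_poly_smult map_poly_pCons pCons.IH)
qed simp

lemma poly_map_of_real: "poly (map_poly complex_of_real p) (complex_of_real t) = complex_of_real (poly p t)"
  by (induction p) (auto simp: map_poly_pCons)

context
  fixes T :: "'a::complex_inner \<Rightarrow> 'a"
  assumes bT: "bounded_clinear_op T"
begin

lemma op_cpoly_pCons: "op_cpoly (pCons a q) T x = scaleC a x + T (op_cpoly q T x)"
proof -
  have "op_cpoly (pCons a q) T x = (\<Sum>i\<le>Suc (degree q). scaleC (coeff (pCons a q) i) ((T ^^ i) x))"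
    by (rule op_cpoly_eq_sum_atMost) (simp add: degree_pCons_le)
  also have "\<dots> = scaleC a x + (\<Sum>i\<le>degree q. scaleC (coeff q i) ((T ^^ Suc i) x))"
    by (subst sum.atMost_Suc_shift) simp
  also have "(\<Sum>i\<le>degree q. scaleC (coeff q i) ((T ^^ Suc i) x)) = T (op_cpoly q T x)"
    by (simp add: op_cpoly_def bounded_clinear_op_map_sum[OF bT] bounded_clinear_op_map_scaleC[OF bT])
  finally show ?thesis .
qed

lemma op_cpoly_0 [simp]: "op_cpoly 0 T x = 0"
  by (simp add: op_cpoly_def)

lemma op_cpoly_add: "op_cpoly (p + q) T x = op_cpoly p T x + op_cpoly q T x"
proof -
  define n where "n = max (degree p) (degree q)"
  have "op_cpoly (p + q) T x = (\<Sum>i\<le>n. scaleC (coeff (p + q) i) ((T ^^ i) x))"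
    by (rule op_cpoly_eq_sum_atMost) (simp add: n_def degree_add_le)
  also have "\<dots> = (\<Sum>i\<le>n. scaleC (coeff p i) ((T ^^ i) x)) + (\<Sum>i\<le>n. scaleC (coeff q i) ((T ^^ i) x))"
    by (simp add: scaleC_add_left sum.distrib)
  also have "\<dots> = op_cpoly p T x + op_cpoly q T x"
    by (simp add: op_cpoly_eq_sum_atMost[of p n] op_cpoly_eq_sum_atMost[of q n] n_def)
  finally show ?thesis .
qed

lemma op_cpoly_smult: "op_cpoly (smult c p) T x = scaleC c (op_cpoly p T x)"
proof -
  have "op_cpoly (smult c p) T x = (\<Sum>i\<le>degree p. scaleC (coeff (smult c p) i) ((T ^^ i) x))"
    by (rule op_cpoly_eq_sum_atMost) (rule degree_smult_le)
  then show ?thesis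
    by (simp add: op_cpoly_def scaleC_sum_right scaleC_scaleC)
qed

lemma op_cpoly_mult: "op_cpoly (p * q) T x = op_cpoly p T (op_cpoly q T x)"
proof (induction p arbitrary: x)
  case 0 then show ?case by simp
next
  case (pCons a p)
  have "op_cpoly (pCons a p * q) T x = op_cpoly (smult a q + pCons 0 (p * q)) T x"
    by (simp add: mult_pCons_left)
  also have "\<dots> = scaleC a (op_cpoly q T x) + T (op_cpoly p T (op_cpoly q T x))"
    by (simp add: op_cpoly_add op_cpoly_smult op_cpoly_pCons pCons.IH)
  also have "\<dots> = op_cpoly (pCons a p) T (op_cpoly q T x)"
    by (simp add: op_cpoly_pCons)
  finally show ?case .
qed

lemma op_cpoly_const: "op_cpoly [:c:] T x = scaleC c x"
  by (simp add: bounded_clinear_op_map_zero[OF bT] op_cpoly_pCons)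

lemma op_cpoly_lin: "op_cpoly [:- z, 1:] T x = T x - scaleC z x"
  by (simp add: bounded_clinear_op_map_zero[OF bT] op_cpoly_pCons scaleC_minus_left scaleC_one)

lemma bounded_clinear_op_op_cpoly: "bounded_clinear_op (op_cpoly q T)"
proof (induction q)
  case 0
  then show ?case using bounded_clinear_op_zero by (simp add: fun_eq_iff)
next
  case (pCons a q)
  have "bounded_clinear_op (\<lambda>x. scaleC a x + T (op_cpoly q T x))"
    by (intro bounded_clinear_op_add bounded_clinear_op_scaleC bounded_clinear_op_ident bounded_clinear_op_compose[OF bT] pCons.IH)
  then show ?case by (simp add: op_cpoly_pCons fun_eq_iff)
qed

lemma bounded_clinear_op_op_poly: "bounded_clinear_op (op_poly p T)"
  using bounded_clinear_op_op_cpoly by (simp add: op_poly_eq_op_cpoly[abs_def])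

lemma op_poly_mult: "op_poly (p * q) T x = op_poly p T (op_poly q T x)"
  by (simp add: op_poly_eq_op_cpoly map_poly_of_real_mult op_cpoly_mult)

lemma op_poly_add: "op_poly (p + q) T x = op_poly p T x + op_poly q T x"
  by (simp add: op_poly_eq_op_cpoly map_poly_of_real_add op_cpoly_add)

lemma op_poly_diff: "op_poly (p - q) T x = op_poly p T x - op_poly q T x"
proof -
  have "op_poly (p - q + q) T x = op_poly (p - q) T x + op_poly q T x" by (rule op_poly_add)
  then show ?thesis by simp
qed

lemma op_poly_const: "op_poly [:c:] T x = scaleR c x"
  by (simp add: bounded_clinear_op_map_zero[OF bT] op_poly_eq_op_cpoly map_poly_pCons op_cpoly_const scaleC_of_real)

lemma op_poly_X: "op_poly [:0, 1:] T x = T x"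
  by (simp add: bounded_clinear_op_map_zero[OF bT] op_poly_eq_op_cpoly map_poly_pCons op_cpoly_pCons scaleC_one)

lemma op_poly_pCons: "op_poly (pCons a p) T x = scaleR a x + T (op_poly p T x)"
  by (simp add: op_poly_eq_op_cpoly map_poly_pCons op_cpoly_pCons scaleC_of_real)

lemma op_poly_comm: "op_poly p T (T x) = T (op_poly p T x)"
proof -
  have "op_poly (p * [:0,1:]) T x = op_poly ([:0,1:] * p) T x" by (simp add: mult.commute)
  then show ?thesis by (simp only: op_poly_mult op_poly_X)
qed

lemma selfadjoint_op_poly: "selfadjoint T \<Longrightarrow> selfadjoint (op_poly p T)"
proof (induction p)
  case 0 then show ?case by (simp add: selfadjoint_def op_poly_eq_op_cpoly)
next
  case (pCons a p)
  then have IH: "cinner (op_poly p T x) y = cinner x (op_poly p T y)" for x y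
    by (simp add: selfadjoint_def)
  show ?case unfolding selfadjoint_def
  proof (intro allI)
    fix x y
    have "cinner (op_poly (pCons a p) T x) y = complex_of_real a * cinner x y + cinner (op_poly p T x) (T y)"
      using pCons.prems by (simp add: op_poly_pCons cinner_add_left cinner_scaleR_left selfadjoint_def)
    also have "\<dots> = complex_of_real a * cinner x y + cinner x (T (op_poly p T y))"
      by (simp add: IH op_poly_comm)
    also have "\<dots> = cinner x (op_poly (pCons a p) T y)"
      by (simp add: op_poly_pCons cinner_add_right cinner_scaleR_right)
    finally show "cinner (op_poly (pCons a p) T x) y = cinner x (op_poly (pCons a p) T y)" .
  qed
qed

end

section \<open>Approximate point spectrum and norms of polynomials in a positive operator\<close>

definition bounded_below :: "('a::complex_inner \<Rightarrow> 'a) \<Rightarrow> bool" where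
  "bounded_below F \<longleftrightarrow> (\<exists>\<delta>>0. \<forall>x. \<delta> * norm x \<le> norm (F x))"

lemma not_bounded_below_iff:
  fixes F :: "'a::complex_inner \<Rightarrow> 'a"
  assumes bF: "bounded_clinear_op F"
  shows "\<not> bounded_below F \<longleftrightarrow> (\<forall>\<delta>>0. \<exists>x. norm x = 1 \<and> norm (F x) < \<delta>)"
proof
  assume nb: "\<not> bounded_below F"
  show "\<forall>\<delta>>0. \<exists>x. norm x = 1 \<and> norm (F x) < \<delta>"
  proof (intro allI impI)
    fix \<delta> :: real assume "\<delta> > 0"
    with nb obtain x where x: "norm (F x) < \<delta> * norm x" unfolding bounded_below_def by (auto simp: not_le)
    then have "x \<noteq> 0" using bF by auto
    then obtain u where u: "norm u = 1" "F x = scaleR (norm x) (F u)"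
      by (rule bounded_clinear_op_unit_scale[OF bF])
    with x \<open>x \<noteq> 0\<close> have "norm (F u) < \<delta>" by (simp add: mult.commute)
    with u(1) show "\<exists>x. norm x = 1 \<and> norm (F x) < \<delta>" by blast
  qed
next
  assume h: "\<forall>\<delta>>0. \<exists>x. norm x = 1 \<and> norm (F x) < \<delta>"
  show "\<not> bounded_below F"
  proof
    assume "bounded_below F"
    then obtain \<delta> where "\<delta> > 0" and d: "\<And>x. \<delta> * norm x \<le> norm (F x)"
      unfolding bounded_below_def by blast
    with h obtain x where "norm x = 1" "norm (F x) < \<delta>" by blast
    with d[of x] show False by simp
  qed
qed

lemma bounded_below_compose:
  assumes "bounded_below F" "bounded_below G"
  shows "bounded_below (\<lambda>x. F (G x))"
proof -
  obtain \<delta> \<epsilon> where d: "\<delta> > 0" "\<And>x. \<delta> * norm x \<le> norm (F x)"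
    and e: "\<epsilon> > 0" "\<And>x. \<epsilon> * norm x \<le> norm (G x)"
    using assms unfolding bounded_below_def by blast
  have "\<delta> * \<epsilon> * norm x \<le> norm (F (G x))" for x
  proof -
    have "\<delta> * (\<epsilon> * norm x) \<le> \<delta> * norm (G x)" using mult_left_mono[OF e(2)] d(1) by simp
    also have "\<dots> \<le> norm (F (G x))" by (rule d(2))
    finally show ?thesis by (simp add: mult.assoc)
  qed
  then show ?thesis unfolding bounded_below_def using d(1) e(1) by (metis mult_pos_pos)
qed

lemma not_bounded_below_poly_root:
  fixes T :: "'a::complex_inner \<Rightarrow> 'a"
  assumes bT: "bounded_clinear_op T"
  shows "q \<noteq> 0 \<Longrightarrow> \<not> bounded_below (op_cpoly q T) \<Longrightarrow>
    \<exists>z. poly q z = 0 \<and> \<not> bounded_below (\<lambda>x. T x - scaleC z x)"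
proof (induction "degree q" arbitrary: q rule: less_induct)
  case less
  show ?case
  proof (cases "degree q = 0")
    case True
    then obtain c where qc: "q = [:c:]" by (metis degree_eq_zeroE)
    with less.prems have "0 < cmod c" by simp
    then have "bounded_below (op_cpoly q T)"
      unfolding bounded_below_def by (intro exI[of _ "cmod c"]) (simp add: qc op_cpoly_const[OF bT] norm_scaleC)
    with less.prems show ?thesis by blast
  next
    case False
    then have "\<not> (\<exists>a l. a \<noteq> 0 \<and> l = 0 \<and> q = pCons a l)" by auto
    then obtain z where z: "poly q z = 0" using fundamental_theorem_of_algebra_alt by blast
    then obtain r where qr: "q = [:- z, 1:] * r" using poly_eq_0_iff_dvd by (metis dvdE)
    have r0: "r \<noteq> 0" using less.prems(1) qr by auto
    have "degree q = degree [:- z, 1:] + degree r"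
      unfolding qr by (rule degree_mult_eq) (use r0 in auto)
    then have dr: "degree r < degree q" by simp
    show ?thesis
    proof (cases "bounded_below (\<lambda>x. T x - scaleC z x)")
      case False with z show ?thesis by blast
    next
      case True
      have "op_cpoly q T x = T (op_cpoly r T x) - scaleC z (op_cpoly r T x)" for x
        by (simp only: qr op_cpoly_mult[OF bT] op_cpoly_lin[OF bT])
      then have "op_cpoly q T = (\<lambda>x. T (op_cpoly r T x) - scaleC z (op_cpoly r T x))"
        by (simp add: fun_eq_iff)
      then have "\<not> bounded_below (op_cpoly r T)"
        using bounded_below_compose[OF True, of "op_cpoly r T"] less.prems(2) by auto
      from less.hyps[OF dr r0 this] obtain w where "poly r w = 0" "\<not> bounded_below (\<lambda>x. T x - scaleC w x)"
        by blast
      then show ?thesis by (intro exI[of _ w]) (simp add: qr)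
    qed
  qed
qed

lemma positive_op_approx_spectrum:
  fixes T :: "'a::complex_inner \<Rightarrow> 'a"
  assumes pT: "positive_op T" and n: "\<not> bounded_below (\<lambda>x. T x - scaleC z x)"
  shows "z = complex_of_real (Re z)" "0 \<le> Re z" "Re z \<le> onorm T"
proof -
  have bT: "bounded_clinear_op T" and sT: "selfadjoint T" using pT by (simp_all add: positive_op_def)
  have bTz: "bounded_clinear_op (\<lambda>x. T x - scaleC z x)"
    by (intro bounded_clinear_op_diff bT bounded_clinear_op_scaleC bounded_clinear_op_ident)
  have key: "\<bar>Im z\<bar> < \<delta> \<and> - \<delta> < Re z \<and> Re z < onorm T + \<delta>" if d: "\<delta> > 0" for \<delta>
  proof -
    obtain x where x: "norm x = 1" "norm (T x - scaleC z x) < \<delta>"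
      using n d unfolding not_bounded_below_iff[OF bTz] by blast
    define t where "t = Re (cinner (T x) x)"
    have t0: "0 \<le> t" using pT by (simp add: positive_op_def t_def)
    have tM: "t \<le> onorm T" using quadratic_form_le_onorm[OF bT, of x] x(1) by (simp add: t_def)
    have "cinner (T x - scaleC z x) x = complex_of_real t - cnj z"
      using x(1) by (simp add: cinner_diff_left cinner_scaleC_left cinner_self_norm t_def
          selfadjoint_quadratic_real[OF sT, symmetric])
    moreover have "cmod (cinner (T x - scaleC z x) x) \<le> norm (T x - scaleC z x)"
      using cmod_cinner_le[of "T x - scaleC z x" x] x(1) by simp
    ultimately have c: "cmod (complex_of_real t - cnj z) < \<delta>" using x(2) by simp
    have "\<bar>Im z\<bar> \<le> cmod (complex_of_real t - cnj z)"
      using abs_Im_le_cmod[of "complex_of_real t - cnj z"] by simp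
    moreover have "\<bar>t - Re z\<bar> \<le> cmod (complex_of_real t - cnj z)"
      using abs_Re_le_cmod[of "complex_of_real t - cnj z"] by simp
    ultimately show ?thesis using c t0 tM by linarith
  qed
  have "Im z = 0" using key[of "\<bar>Im z\<bar>"] by (cases "Im z = 0") simp_all
  then show "z = complex_of_real (Re z)" by (simp add: complex_eq_iff)
  show "0 \<le> Re z" using key[of "- Re z"] by (cases "0 \<le> Re z") simp_all
  show "Re z \<le> onorm T" using key[of "Re z - onorm T"] by (cases "Re z \<le> onorm T") simp_all
qed

lemma selfadjoint_square_minus_onorm_not_bounded_below:
  fixes H :: "'a::complex_inner \<Rightarrow> 'a"
  assumes bH: "bounded_clinear_op H" and sH: "selfadjoint H" and a0: "0 < onorm H"
  shows "\<not> bounded_below (\<lambda>x. H (H x) - scaleR ((onorm H)\<^sup>2) x)"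
proof -
  define a where "a = onorm H"
  have "\<exists>x. norm x = 1 \<and> norm (H (H x) - scaleR (a\<^sup>2) x) < \<delta>" if d: "\<delta> > 0" for \<delta>
  proof -
    \<comment> \<open>an almost norming unit vector of \<open>H\<close> is an approximate eigenvector of \<open>H\<^sup>2\<close>\<close>
    define t where "t = \<delta>\<^sup>2 / (2 * a ^ 3 + 1)"
    have den: "0 < 2 * a ^ 3 + 1" using a0 by (simp add: a_def add_pos_pos)
    have t0: "0 < t" and small: "2 * a ^ 3 * t < \<delta>\<^sup>2"
      using d den by (simp_all add: t_def field_simps)
    have "0 \<le> max 0 (a - t)" "max 0 (a - t) < onorm H" using a0 t0 by (auto simp: a_def)
    then obtain x where x: "norm x = 1" "max 0 (a - t) < norm (H x)"
      by (rule bounded_clinear_op_almost_norming[OF bH])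
    have "(norm (H (H x) - scaleR (a\<^sup>2) x))\<^sup>2 \<le> 2 * a ^ 3 * t"
    proof (rule norm_sub_sq_scaleR_le[OF x(1)])
      show "Re (cinner (H (H x)) x) = (norm (H x))\<^sup>2"
        using sH by (simp add: selfadjoint_def norm_sq_cinner)
      show "norm (H (H x)) \<le> a * norm (H x)" "norm (H x) \<le> a"
        using bounded_clinear_op_norm_le[OF bH, of x] bounded_clinear_op_norm_le[OF bH, of "H x"] x(1)
        by (auto simp: a_def)
    qed (use x(2) t0 in auto)
    then have "norm (H (H x) - scaleR (a\<^sup>2) x) < \<delta>"
      using power_less_imp_less_base[OF le_less_trans[OF _ small]] d by simp
    with x(1) show ?thesis by blast
  qed
  moreover have "bounded_clinear_op (\<lambda>x. H (H x) - scaleR (a\<^sup>2) x)"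
    by (intro bounded_clinear_op_diff bounded_clinear_op_compose[OF bH bH]
        bounded_clinear_op_scaleR[OF bounded_clinear_op_ident])
  ultimately show ?thesis by (simp add: not_bounded_below_iff a_def)
qed

lemma onorm_op_poly_le:
  fixes T :: "'a::complex_inner \<Rightarrow> 'a"
  assumes pT: "positive_op T" and s: "0 \<le> s"
    and ps: "\<And>t. 0 \<le> t \<Longrightarrow> t \<le> onorm T \<Longrightarrow> \<bar>poly p t\<bar> \<le> s"
  shows "onorm (op_poly p T) \<le> s"
proof (rule ccontr)
  assume "\<not> onorm (op_poly p T) \<le> s"
  then have sa: "s < onorm (op_poly p T)" by simp
  have bT: "bounded_clinear_op T" and sT: "selfadjoint T" using pT by (simp_all add: positive_op_def)
  define a where "a = onorm (op_poly p T)"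
  \<comment> \<open>\<open>a\<^sup>2\<close> is in the approximate spectrum of \<open>p(T)\<^sup>2\<close>, hence a root of \<open>p\<^sup>2 - a\<^sup>2\<close> lies in \<open>[0, \<parallel>T\<parallel>]\<close>\<close>
  define Q where "Q = map_poly complex_of_real (p * p - [:a\<^sup>2:])"
  have "op_cpoly Q T = (\<lambda>x. op_poly p T (op_poly p T x) - scaleR (a\<^sup>2) x)"
    by (simp add: fun_eq_iff Q_def op_poly_eq_op_cpoly[symmetric] op_poly_diff[OF bT]
        op_poly_mult[OF bT] op_poly_const[OF bT])
  then have nb: "\<not> bounded_below (op_cpoly Q T)"
    using selfadjoint_square_minus_onorm_not_bounded_below[OF bounded_clinear_op_op_poly[OF bT]
        selfadjoint_op_poly[OF bT sT]] sa s by (simp add: a_def)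
  have nroot: "poly Q (complex_of_real t) \<noteq> 0" if "0 \<le> t" "t \<le> onorm T" for t
  proof
    assume "poly Q (complex_of_real t) = 0"
    then have "complex_of_real (poly (p * p - [:a\<^sup>2:]) t) = 0" by (simp only: Q_def poly_map_of_real)
    then have "poly (p * p - [:a\<^sup>2:]) t = 0" by (simp only: of_real_eq_0_iff)
    then have "(poly p t)\<^sup>2 = a\<^sup>2" by (simp add: power2_eq_square)
    moreover have "0 < a" using sa s by (simp add: a_def)
    ultimately have "\<bar>poly p t\<bar> = a" by (metis abs_of_pos power2_eq_iff_nonneg abs_ge_zero power2_abs)
    with ps[OF that] sa show False by (simp add: a_def)
  qed
  have "Q \<noteq> 0" using nroot[of 0] bounded_clinear_op_onorm_nonneg[OF bT] by auto
  from not_bounded_below_poly_root[OF bT this nb] obtain z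
    where z: "poly Q z = 0" "\<not> bounded_below (\<lambda>x. T x - scaleC z x)"
    by blast
  then show False using nroot[of "Re z"] positive_op_approx_spectrum[OF pT z(2)] by metis
qed

lemma norm_op_poly_le:
  fixes T :: "'a::complex_inner \<Rightarrow> 'a"
  assumes pT: "positive_op T" and s: "0 \<le> s"
    and ps: "\<And>t. 0 \<le> t \<Longrightarrow> t \<le> onorm T \<Longrightarrow> \<bar>poly p t\<bar> \<le> s"
  shows "norm (op_poly p T x) \<le> s * norm x"
proof -
  have bT: "bounded_clinear_op T" using pT by (simp add: positive_op_def)
  have "norm (op_poly p T x) \<le> onorm (op_poly p T) * norm x"
    by (rule bounded_clinear_op_norm_le[OF bounded_clinear_op_op_poly[OF bT]])
  also have "\<dots> \<le> s * norm x" by (intro mult_right_mono onorm_op_poly_le[OF pT s ps]) auto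
  finally show ?thesis .
qed

lemma continuous_on_interval_bounded:
  fixes f :: "real \<Rightarrow> real"
  assumes "continuous_on {0..M} f"
  obtains K where "0 \<le> K" "\<And>t. 0 \<le> t \<Longrightarrow> t \<le> M \<Longrightarrow> \<bar>f t\<bar> \<le> K"
proof -
  have "compact (f ` {0..M})" by (intro compact_continuous_image assms) simp
  then obtain K where K: "\<forall>y\<in>f ` {0..M}. norm y \<le> K"
    using compact_imp_bounded bounded_iff by metis
  show ?thesis by (rule that[of "max K 0"]) (use K in \<open>auto simp: le_max_iff_disj\<close>)
qed

lemma op_poly_quadratic_ge:
  fixes T :: "'a::complex_inner \<Rightarrow> 'a"
  assumes pT: "positive_op T" and e: "0 \<le> \<epsilon>"
    and pe: "\<And>t. 0 \<le> t \<Longrightarrow> t \<le> onorm T \<Longrightarrow> - \<epsilon> \<le> poly p t"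
  shows "- \<epsilon> * (norm x)\<^sup>2 \<le> Re (cinner (op_poly p T x) x)"
proof -
  have bT: "bounded_clinear_op T" using pT by (simp add: positive_op_def)
  obtain K where K0: "K \<ge> 0" and K: "\<And>t. 0 \<le> t \<Longrightarrow> t \<le> onorm T \<Longrightarrow> \<bar>poly p t\<bar> \<le> K"
    by (rule continuous_on_interval_bounded[of "onorm T" "poly p"]) (auto intro: continuous_intros)
  \<comment> \<open>\<open>p\<close> takes values in \<open>[c - w, c + w] = [-\<epsilon>, K]\<close>\<close>
  define c where "c = (K - \<epsilon>) / 2"
  define w where "w = (K + \<epsilon>) / 2"
  have "\<bar>poly p t - c\<bar> \<le> w" if "0 \<le> t" "t \<le> onorm T" for t
  proof -
    have "poly p t \<le> K" using K[OF that] by simp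
    with pe[OF that] show ?thesis unfolding abs_le_iff c_def w_def by (simp add: field_simps)
  qed
  then have "\<bar>poly (p - [:c:]) t\<bar> \<le> w" if "0 \<le> t" "t \<le> onorm T" for t
    using that by simp
  then have "norm (op_poly (p - [:c:]) T x) \<le> w * norm x"
    using K0 e by (intro norm_op_poly_le[OF pT]) (auto simp: w_def)
  then have "\<bar>Re (cinner (op_poly (p - [:c:]) T x) x)\<bar> \<le> w * (norm x)\<^sup>2"
    by (rule abs_Re_cinner_le_sq)
  then have "- (w * (norm x)\<^sup>2) \<le> Re (cinner (op_poly (p - [:c:]) T x) x)"
    by linarith
  moreover have "Re (cinner (op_poly (p - [:c:]) T x) x) = Re (cinner (op_poly p T x) x) - c * (norm x)\<^sup>2"
    by (simp add: op_poly_diff[OF bT] op_poly_const[OF bT] cinner_diff_left cinner_scaleR_left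
        norm_sq_cinner)
  moreover have "- \<epsilon> * (norm x)\<^sup>2 = c * (norm x)\<^sup>2 - w * (norm x)\<^sup>2"
    by (simp add: c_def w_def field_simps)
  ultimately show ?thesis by linarith
qed

section \<open>Continuous functional calculus for positive operators\<close>

lemma poly_approx_continuous:
  fixes f :: "real \<Rightarrow> real"
  assumes cf: "continuous_on {0..M} f" and e: "0 < e"
  shows "\<exists>p. \<forall>t\<in>{0..M}. \<bar>poly p t - f t\<bar> < e"
proof -
  obtain g where g: "real_polynomial_function g" "\<And>x. x \<in> {0..M} \<Longrightarrow> \<bar>f x - g x\<bar> < e"
    using Stone_Weierstrass_real_polynomial_function[OF compact_Icc cf e] by blast
  obtain a n where gs: "g = (\<lambda>x. \<Sum>i\<le>n. a i * x ^ i)"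
    using g(1) real_polynomial_function_iff_sum by blast
  define p where "p = (\<Sum>i\<le>n. monom (a i) i)"
  have "poly p t = g t" for t by (simp add: p_def gs poly_sum poly_monom)
  then show ?thesis using g(2) by (intro exI[of _ p]) (auto simp: abs_minus_commute)
qed

lemma poly_approx_seq:
  fixes f :: "real \<Rightarrow> real"
  assumes cf: "continuous_on {0..M} f"
  obtains p where "\<And>n t. t \<in> {0..M} \<Longrightarrow> \<bar>poly (p n) t - f t\<bar> < 1 / Suc n"
proof -
  have "\<forall>n. \<exists>q. \<forall>t\<in>{0..M}. \<bar>poly q t - f t\<bar> < 1 / Suc n"
    using poly_approx_continuous[OF cf] by simp
  from choice[OF this] obtain p where "\<forall>n. \<forall>t\<in>{0..M}. \<bar>poly (p n) t - f t\<bar> < 1 / Suc n" ..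
  then show ?thesis using that by blast
qed

lemma inverse_Suc_eventually_less:
  fixes e :: real assumes "0 < e"
  obtains N where "\<And>n. N \<le> n \<Longrightarrow> 1 / real (Suc n) < e"
proof -
  obtain N where N: "1 / real (Suc N) < e" using nat_approx_posE[OF assms] by blast
  show ?thesis
  proof (rule that)
    fix n assume "N \<le> n"
    then have "1 / real (Suc n) \<le> 1 / real (Suc N)" by (simp add: frac_le)
    with N show "1 / real (Suc n) < e" by linarith
  qed
qed

lemma uniform_limit_poly_approx_seq:
  fixes f :: "real \<Rightarrow> real"
  assumes h: "\<And>n t. t \<in> S \<Longrightarrow> \<bar>poly (p n) t - f t\<bar> < 1 / Suc n"
  shows "uniform_limit S (\<lambda>n t. poly (p n) t) f sequentially"
proof (rule uniform_limitI)
  fix e :: real assume e: "0 < e"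
  obtain N where N: "\<And>n. N \<le> n \<Longrightarrow> 1 / real (Suc n) < e"
    using inverse_Suc_eventually_less[OF e] by blast
  have "\<forall>t\<in>S. dist (poly (p n) t) (f t) < e" if "N \<le> n" for n
    using h N[OF that] unfolding dist_real_def by (meson order.strict_trans)
  then show "\<forall>\<^sub>F n in sequentially. \<forall>t\<in>S. dist (poly (p n) t) (f t) < e"
    unfolding eventually_sequentially by blast
qed

lemma nonpos_if_le_small_mult:
  fixes r C :: real
  assumes h: "\<And>\<epsilon>. 0 < \<epsilon> \<Longrightarrow> \<epsilon> < 1 \<Longrightarrow> r \<le> \<epsilon> * C"
  shows "r \<le> 0"
proof (rule ccontr)
  assume "\<not> r \<le> 0"
  then have r: "0 < r" by simp
  define \<epsilon> where "\<epsilon> = min (1/2) (r / (2 * (\<bar>C\<bar> + 1)))"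
  have e0: "0 < \<epsilon>" "\<epsilon> < 1" using r by (auto simp: \<epsilon>_def)
  have "\<epsilon> * C \<le> \<epsilon> * \<bar>C\<bar>" using e0 by (simp add: mult_left_mono)
  also have "\<dots> \<le> r / (2 * (\<bar>C\<bar> + 1)) * \<bar>C\<bar>"
    by (intro mult_right_mono) (auto simp: \<epsilon>_def)
  also have "\<dots> < r"
  proof -
    have "r * \<bar>C\<bar> < r * (2 * (\<bar>C\<bar> + 1))" using r by (intro mult_strict_left_mono) auto
    then show ?thesis by (simp add: field_simps)
  qed
  finally show False using h[OF e0] by simp
qed

lemma onorm_tendsto_zeroI:
  fixes F :: "nat \<Rightarrow> 'a::complex_inner \<Rightarrow> 'a"
  assumes h: "\<And>e. 0 < e \<Longrightarrow> \<forall>\<^sub>F n in sequentially. \<forall>x. norm (F n x) \<le> e * norm x"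
    and bF: "\<And>n. bounded_clinear_op (F n)"
  shows "(\<lambda>n. onorm (F n)) \<longlonglongrightarrow> 0"
proof (rule LIMSEQ_I)
  fix r :: real assume r: "0 < r"
  from h[of "r/2"] r obtain N where N: "\<And>n x. N \<le> n \<Longrightarrow> norm (F n x) \<le> r/2 * norm x"
    unfolding eventually_sequentially by auto
  have "norm (onorm (F n)) < r" if "N \<le> n" for n
  proof -
    have "onorm (F n) \<le> r/2" using r N[OF that] by (intro onorm_bound) auto
    then show ?thesis using bounded_clinear_op_onorm_nonneg[OF bF] r by simp
  qed
  then show "\<exists>N. \<forall>n\<ge>N. norm (onorm (F n) - 0) < r" by auto
qed

lemma Cauchy_if_norm_diff_le_inverse_Suc:
  fixes X :: "nat \<Rightarrow> 'a::real_normed_vector"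
  assumes "\<And>m n. norm (X m - X n) \<le> (1 / Suc m + 1 / Suc n) * c" "0 \<le> c"
  shows "Cauchy X"
proof (rule metric_CauchyI)
  fix e :: real assume e: "0 < e"
  have c1: "0 < c + 1" using assms(2) by simp
  then have "0 < e / 2 / (c + 1)" using e by simp
  then obtain N where N: "\<And>n. N \<le> n \<Longrightarrow> 1 / real (Suc n) < e / 2 / (c + 1)"
    using inverse_Suc_eventually_less by blast
  have N': "1 / real (Suc n) * (c + 1) < e / 2" if "N \<le> n" for n
    using N[OF that] c1 by (simp add: pos_less_divide_eq ac_simps)
  have "dist (X m) (X n) < e" if "N \<le> m" "N \<le> n" for m n
  proof -
    have "dist (X m) (X n) \<le> (1 / Suc m + 1 / Suc n) * c" unfolding dist_norm by (rule assms(1))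
    also have "\<dots> \<le> (1 / Suc m + 1 / Suc n) * (c + 1)" by (intro mult_left_mono) auto
    also have "\<dots> = 1 / Suc m * (c + 1) + 1 / Suc n * (c + 1)" by (rule distrib_right)
    also have "\<dots> < e" using N'[OF that(1)] N'[OF that(2)] by linarith
    finally show ?thesis .
  qed
  then show "\<exists>M. \<forall>m\<ge>M. \<forall>n\<ge>M. dist (X m) (X n) < e" by blast
qed

lemma bounded_clinear_op_limit_exists:
  fixes P :: "nat \<Rightarrow> 'a::chilbert_space \<Rightarrow> 'a"
  assumes bP: "\<And>n. bounded_clinear_op (P n)"
    and Pd: "\<And>n m x. norm (P n x - P m x) \<le> (1 / Suc n + 1 / Suc m) * norm x"
  obtains S where "bounded_clinear_op S" "\<And>n x. norm (P n x - S x) \<le> 1 / Suc n * norm x"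
proof -
  have "Cauchy (\<lambda>n. P n x)" for x
    by (rule Cauchy_if_norm_diff_le_inverse_Suc[of _ "norm x"]) (use Pd in auto)
  then obtain S where PS: "\<And>x. (\<lambda>n. P n x) \<longlonglongrightarrow> S x"
    unfolding Cauchy_convergent_iff convergent_def by metis
  have PSb: "norm (P n x - S x) \<le> 1 / Suc n * norm x" for n x
  proof -
    have "(\<lambda>m. norm (P n x - P m x)) \<longlonglongrightarrow> norm (P n x - S x)"
      by (intro tendsto_intros PS)
    moreover have "(\<lambda>m. (1 / Suc n + 1 / Suc m) * norm x) \<longlonglongrightarrow> (1 / Suc n + 0) * norm x"
      by (intro tendsto_intros LIMSEQ_inverse_real_of_nat[unfolded inverse_eq_divide])
    ultimately have "norm (P n x - S x) \<le> (1 / Suc n + 0) * norm x"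
      by (rule LIMSEQ_le) (use Pd in blast)
    then show ?thesis by simp
  qed
  have "S (x + y) = S x + S y" for x y
  proof -
    have "(\<lambda>n. P n (x + y)) \<longlonglongrightarrow> S x + S y"
      using tendsto_add[OF PS PS] by (simp add: bounded_clinear_op_map_add[OF bP])
    then show ?thesis using PS LIMSEQ_unique by blast
  qed
  moreover have "S (scaleC c x) = scaleC c (S x)" for c x
  proof -
    have "bounded_linear (\<lambda>v::'a. scaleC c v)"
      by (rule bounded_clinear_op_bounded_linear[OF bounded_clinear_op_scaleC[OF bounded_clinear_op_ident]])
    from bounded_linear.tendsto[OF this PS]
    have "(\<lambda>n. P n (scaleC c x)) \<longlonglongrightarrow> scaleC c (S x)" by (simp add: bounded_clinear_op_map_scaleC[OF bP])
    then show ?thesis using PS LIMSEQ_unique by blast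
  qed
  moreover have "norm (S x) \<le> (onorm (P 0) + 1) * norm x" for x
  proof -
    have "norm (S x) \<le> norm (P 0 x) + norm (S x - P 0 x)" by (rule norm_triangle_sub)
    also have "\<dots> \<le> onorm (P 0) * norm x + 1 * norm x"
      using PSb[of 0 x] by (intro add_mono bounded_clinear_op_norm_le[OF bP]) (simp add: norm_minus_commute)
    finally show ?thesis by (simp add: algebra_simps)
  qed
  ultimately have "bounded_clinear_op S" by (rule bounded_clinear_opI)
  with PSb show ?thesis using that by blast
qed

lemma op_poly_approx_eigenvector:
  fixes T :: "'a::complex_inner \<Rightarrow> 'a"
  assumes bT: "bounded_clinear_op T"
  obtains C where "0 \<le> C" "\<And>x. norm (op_poly p T x - scaleR (poly p l) x) \<le> C * norm (T x - scaleR l x)"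
proof -
  obtain q where pq: "p - [:poly p l:] = [:- l, 1:] * q"
    using poly_eq_0_iff_dvd[of "p - [:poly p l:]" l] by (auto elim: dvdE)
  have "op_poly [:- l, 1:] T x = T x - scaleR l x" for x
    by (simp add: op_poly_pCons[OF bT] bounded_clinear_op_map_scaleR[OF bT] op_poly_def)
  then have "op_poly (p - [:poly p l:]) T x = op_poly q T (T x - scaleR l x)" for x
    by (simp only: pq mult.commute[of "[:- l, 1:]" q] op_poly_mult[OF bT])
  then have "op_poly p T x - scaleR (poly p l) x = op_poly q T (T x - scaleR l x)" for x
    by (simp add: op_poly_diff[OF bT] op_poly_const[OF bT])
  then show ?thesis
    using bounded_clinear_op_op_poly[OF bT, of q]
    by (intro that[of "onorm (op_poly q T)"]) (simp_all add: bounded_clinear_op_onorm_nonneg bounded_clinear_op_norm_le)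
qed

context
  fixes T :: "'a::complex_inner \<Rightarrow> 'a" and f :: "real \<Rightarrow> real"
  assumes pT: "positive_op T"
begin

lemma norm_op_poly_diff_le:
  assumes "\<And>t. 0 \<le> t \<Longrightarrow> t \<le> onorm T \<Longrightarrow> \<bar>poly p t - f t\<bar> \<le> a"
    and "\<And>t. 0 \<le> t \<Longrightarrow> t \<le> onorm T \<Longrightarrow> \<bar>poly q t - f t\<bar> \<le> b"
  shows "norm (op_poly p T x - op_poly q T x) \<le> (a + b) * norm x"
proof -
  note bT = positive_op_bounded[OF pT]
  have "0 \<le> a" using assms(1)[of 0] bounded_clinear_op_onorm_nonneg[OF bT] by linarith
  moreover have "0 \<le> b" using assms(2)[of 0] bounded_clinear_op_onorm_nonneg[OF bT] by linarith
  moreover have "\<bar>poly (p - q) t\<bar> \<le> a + b" if "0 \<le> t" "t \<le> onorm T" for t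
    using assms(1)[OF that] assms(2)[OF that] by simp
  ultimately have "norm (op_poly (p - q) T x) \<le> (a + b) * norm x"
    by (intro norm_op_poly_le[OF pT]) simp_all
  then show ?thesis by (simp add: op_poly_diff[OF bT])
qed

lemma norm_op_poly_square_sub_le:
  assumes fsq: "\<And>t. 0 \<le> t \<Longrightarrow> t \<le> onorm T \<Longrightarrow> f t * f t = t"
    and F: "\<And>t. 0 \<le> t \<Longrightarrow> t \<le> onorm T \<Longrightarrow> \<bar>f t\<bar> \<le> F"
    and p: "\<And>t. 0 \<le> t \<Longrightarrow> t \<le> onorm T \<Longrightarrow> \<bar>poly p t - f t\<bar> \<le> e" and e: "0 \<le> e" "e \<le> 1"
  shows "norm (op_poly p T (op_poly p T x) - T x) \<le> e * (2 * F + 1) * norm x"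
proof -
  note bT = positive_op_bounded[OF pT]
  have "op_poly p T (op_poly p T x) - T x = op_poly (p * p - [:0, 1:]) T x"
    by (simp add: op_poly_diff[OF bT] op_poly_mult[OF bT] op_poly_X[OF bT])
  moreover have "norm (op_poly (p * p - [:0, 1:]) T x) \<le> e * (2 * F + 1) * norm x"
  proof (rule norm_op_poly_le[OF pT])
    show "0 \<le> e * (2 * F + 1)"
      using e F[of 0] bounded_clinear_op_onorm_nonneg[OF bT] by simp
  next
    fix t assume t: "0 \<le> t" "t \<le> onorm T"
    have "poly (p * p - [:0, 1:]) t = (poly p t - f t) * (poly p t + f t)"
      using fsq[OF t] by (simp add: algebra_simps)
    moreover have "\<bar>poly p t + f t\<bar> \<le> 2 * F + 1" using p[OF t] F[OF t] e by linarith
    ultimately show "\<bar>poly (p * p - [:0, 1:]) t\<bar> \<le> e * (2 * F + 1)"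
      using p[OF t] by (simp add: abs_mult mult_mono)
  qed
  ultimately show ?thesis by simp
qed

end

definition functional_calculus :: "('a::complex_inner \<Rightarrow> 'a) \<Rightarrow> (real \<Rightarrow> real) \<Rightarrow> ('a \<Rightarrow> 'a) \<Rightarrow> bool" where
  "functional_calculus T f S \<longleftrightarrow> bounded_clinear_op S \<and>
     (\<forall>p :: nat \<Rightarrow> real poly.
        uniform_limit {0..onorm T} (\<lambda>n t. poly (p n) t) f sequentially \<longrightarrow>
        (\<lambda>n. onorm (\<lambda>x. op_poly (p n) T x - S x)) \<longlonglongrightarrow> 0)"

context
  fixes T :: "'a::chilbert_space \<Rightarrow> 'a" and f :: "real \<Rightarrow> real"
  assumes pT: "positive_op T" and cf: "continuous_on {0..onorm T} f"
begin

private lemma bT: "bounded_clinear_op T" using pT by (simp add: positive_op_def)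

lemma functional_calculus_exists: "\<exists>S. functional_calculus T f S"
proof -
  obtain p where p: "\<And>n t. t \<in> {0..onorm T} \<Longrightarrow> \<bar>poly (p n) t - f t\<bar> < 1 / Suc n"
    using poly_approx_seq[OF cf] by blast
  have "norm (op_poly (p n) T x - op_poly (p m) T x) \<le> (1 / Suc n + 1 / Suc m) * norm x" for n m x
    by (rule norm_op_poly_diff_le[OF pT]) (use p in \<open>auto intro: less_imp_le\<close>)
  then obtain S where bS: "bounded_clinear_op S"
    and PS: "\<And>n x. norm (op_poly (p n) T x - S x) \<le> 1 / Suc n * norm x"
    using bounded_clinear_op_limit_exists[of "\<lambda>n. op_poly (p n) T"] bounded_clinear_op_op_poly[OF bT]
    by blast
  have "functional_calculus T f S"
    unfolding functional_calculus_def
  proof (intro conjI bS allI impI onorm_tendsto_zeroI)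
    fix q :: "nat \<Rightarrow> real poly" and e :: real
    assume ul: "uniform_limit {0..onorm T} (\<lambda>n t. poly (q n) t) f sequentially" and e: "0 < e"
    \<comment> \<open>compare \<open>q n\<close> with a fixed good approximant \<open>p k\<close>\<close>
    obtain k where k: "1 / real (Suc k) < e / 3"
      using nat_approx_posE[of "e/3"] e by auto
    have "0 < e / 3" using e by simp
    with ul have "\<forall>\<^sub>F n in sequentially. \<forall>t\<in>{0..onorm T}. dist (poly (q n) t) (f t) < e / 3"
      unfolding uniform_limit_iff by blast
    then show "\<forall>\<^sub>F n in sequentially. \<forall>x. norm (op_poly (q n) T x - S x) \<le> e * norm x"
    proof (rule eventually_mono, intro allI)
      fix n x assume hn: "\<forall>t\<in>{0..onorm T}. dist (poly (q n) t) (f t) < e / 3"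
      have "norm (op_poly (q n) T x - op_poly (p k) T x) \<le> (e / 3 + 1 / Suc k) * norm x"
        by (rule norm_op_poly_diff_le[OF pT]) (use hn p in \<open>auto simp: dist_real_def intro: less_imp_le\<close>)
      then have "norm (op_poly (q n) T x - S x) \<le> (e / 3 + 1 / Suc k) * norm x + 1 / Suc k * norm x"
        using PS by (rule norm_diff_triangle_le)
      also have "\<dots> \<le> (e / 3 + e / 3) * norm x + e / 3 * norm x"
        using k by (intro add_mono mult_right_mono) auto
      finally show "norm (op_poly (q n) T x - S x) \<le> e * norm x" by simp
    qed
  qed (intro bounded_clinear_op_diff bounded_clinear_op_op_poly[OF bT] bS)
  then show ?thesis by blast
qed

lemma functional_calculus_poly_approx:
  assumes S: "functional_calculus T f S" and e: "0 < e"
  obtains p where "\<And>t. 0 \<le> t \<Longrightarrow> t \<le> onorm T \<Longrightarrow> \<bar>poly p t - f t\<bar> \<le> e"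
    "\<And>x. norm (op_poly p T x - S x) \<le> e * norm x"
proof -
  obtain p where p: "\<And>n t. t \<in> {0..onorm T} \<Longrightarrow> \<bar>poly (p n) t - f t\<bar> < 1 / Suc n"
    using poly_approx_seq[OF cf] by blast
  have "uniform_limit {0..onorm T} (\<lambda>n t. poly (p n) t) f sequentially"
    by (rule uniform_limit_poly_approx_seq) (rule p)
  then have "(\<lambda>n. onorm (\<lambda>x. op_poly (p n) T x - S x)) \<longlonglongrightarrow> 0"
    using S by (simp add: functional_calculus_def)
  then obtain N1 where N1: "\<And>n. N1 \<le> n \<Longrightarrow> norm (onorm (\<lambda>x. op_poly (p n) T x - S x) - 0) < e"
    using LIMSEQ_D e by blast
  obtain N2 where N2: "\<And>n. N2 \<le> n \<Longrightarrow> 1 / real (Suc n) < e"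
    using inverse_Suc_eventually_less[OF e] by blast
  define n where "n = max N1 N2"
  have bS: "bounded_clinear_op S" using S by (simp add: functional_calculus_def)
  have "norm (op_poly (p n) T x - S x) \<le> onorm (\<lambda>x. op_poly (p n) T x - S x) * norm x" for x
    by (rule bounded_clinear_op_norm_le[of "\<lambda>x. op_poly (p n) T x - S x", simplified])
      (intro bounded_clinear_op_diff bounded_clinear_op_op_poly[OF bT] bS)
  also have "onorm (\<lambda>x. op_poly (p n) T x - S x) \<le> e" using N1[of n] by (simp add: n_def)
  finally have "norm (op_poly (p n) T x - S x) \<le> e * norm x" for x
    by (meson mult_right_mono norm_ge_zero order_trans)
  moreover have "\<bar>poly (p n) t - f t\<bar> \<le> e" if "0 \<le> t" "t \<le> onorm T" for t
    using p[of t n] N2[of n] that by (simp add: n_def)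
  ultimately show ?thesis using that by blast
qed

lemma functional_calculus_unique:
  assumes S1: "functional_calculus T f S1" and S2: "functional_calculus T f S2"
  shows "S1 = S2"
proof
  fix x
  obtain p where p: "\<And>n t. t \<in> {0..onorm T} \<Longrightarrow> \<bar>poly (p n) t - f t\<bar> < 1 / Suc n"
    using poly_approx_seq[OF cf] by blast
  have ul: "uniform_limit {0..onorm T} (\<lambda>n t. poly (p n) t) f sequentially"
    by (rule uniform_limit_poly_approx_seq) (rule p)
  define d where "d S n = onorm (\<lambda>x. op_poly (p n) T x - S x)" for S n
  have d: "(\<lambda>n. d S n) \<longlonglongrightarrow> 0" and "norm (op_poly (p n) T x - S x) \<le> d S n * norm x"
    if "functional_calculus T f S" for S n
    using that ul unfolding d_def functional_calculus_def
    by (auto intro!: bounded_clinear_op_norm_le[of "\<lambda>x. op_poly (p n) T x - S x", simplified]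
        bounded_clinear_op_diff bounded_clinear_op_op_poly[OF bT])
  then have "norm (S1 x - S2 x) \<le> (d S1 n + d S2 n) * norm x" for n
    using norm_diff_triangle_le[of "S1 x" "op_poly (p n) T x" _ "S2 x"] S1 S2
    by (simp add: norm_minus_commute distrib_right)
  moreover have "(\<lambda>n. (d S1 n + d S2 n) * norm x) \<longlonglongrightarrow> (0 + 0) * norm x"
    by (intro tendsto_intros d S1 S2)
  ultimately have "norm (S1 x - S2 x) \<le> (0 + 0) * norm x"
    by (intro LIMSEQ_le_const) auto
  then show "S1 x = S2 x" by simp
qed

lemma functional_calculus_The: "functional_calculus T f (The (functional_calculus T f))"
proof -
  obtain S where S: "functional_calculus T f S" using functional_calculus_exists by blast
  have "The (functional_calculus T f) = S"
    by (rule the_equality[of "functional_calculus T f", OF S]) (rule functional_calculus_unique[OF _ S])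
  with S show ?thesis by simp
qed

lemma functional_calculus_selfadjoint:
  assumes S: "functional_calculus T f S"
  shows "selfadjoint S"
  unfolding selfadjoint_def
proof (intro allI)
  fix x y
  have "cmod (cinner (S x) y - cinner x (S y)) \<le> 0"
  proof (rule nonpos_if_le_small_mult[where C="2 * norm x * norm y"])
    fix e :: real assume e: "0 < e" "e < 1"
    obtain p where p: "\<And>x. norm (op_poly p T x - S x) \<le> e * norm x"
      using functional_calculus_poly_approx[OF S e(1)] by blast
    have "selfadjoint (op_poly p T)" using selfadjoint_op_poly[OF bT] pT by (simp add: positive_op_def)
    then have "cinner (S x) y - cinner x (S y) =
        cinner (S x - op_poly p T x) y + cinner x (op_poly p T y - S y)"
      by (simp add: cinner_diff_left cinner_diff_right selfadjoint_def)
    then have "cmod (cinner (S x) y - cinner x (S y)) \<le>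
        norm (S x - op_poly p T x) * norm y + norm x * norm (op_poly p T y - S y)"
      by (metis add_mono cmod_cinner_le norm_triangle_le)
    also have "\<dots> \<le> (e * norm x) * norm y + norm x * (e * norm y)"
      using p[of x] p[of y]
      by (intro add_mono mult_right_mono mult_left_mono) (auto simp: norm_minus_commute)
    finally show "cmod (cinner (S x) y - cinner x (S y)) \<le> e * (2 * norm x * norm y)"
      by (simp add: algebra_simps)
  qed
  then show "cinner (S x) y = cinner x (S y)" by simp
qed

lemma functional_calculus_nonneg:
  assumes S: "functional_calculus T f S" and f0: "\<And>t. 0 \<le> t \<Longrightarrow> t \<le> onorm T \<Longrightarrow> 0 \<le> f t"
  shows "0 \<le> Re (cinner (S x) x)"
proof -
  have "- Re (cinner (S x) x) \<le> 0"
  proof (rule nonpos_if_le_small_mult[where C="2 * (norm x)\<^sup>2"])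
    fix e :: real assume e: "0 < e" "e < 1"
    obtain p where p1: "\<And>t. 0 \<le> t \<Longrightarrow> t \<le> onorm T \<Longrightarrow> \<bar>poly p t - f t\<bar> \<le> e"
      and p2: "\<And>x. norm (op_poly p T x - S x) \<le> e * norm x"
      using functional_calculus_poly_approx[OF S e(1)] by blast
    have "- e \<le> poly p t" if "0 \<le> t" "t \<le> onorm T" for t
      using p1[OF that] f0[OF that] by (simp add: abs_le_iff)
    then have "- e * (norm x)\<^sup>2 \<le> Re (cinner (op_poly p T x) x)"
      using e by (intro op_poly_quadratic_ge[OF pT]) simp_all
    moreover have "\<bar>Re (cinner (op_poly p T x - S x) x)\<bar> \<le> e * (norm x)\<^sup>2"
      by (rule abs_Re_cinner_le_sq[OF p2])
    ultimately show "- Re (cinner (S x) x) \<le> e * (2 * (norm x)\<^sup>2)"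
      by (simp add: abs_le_iff cinner_diff_left)
  qed
  then show ?thesis by simp
qed

lemma functional_calculus_approx_eigenvector:
  assumes S: "functional_calculus T f S" and l: "0 \<le> l" "l \<le> onorm T" and e: "0 < e"
  obtains \<eta> where "0 < \<eta>"
    "\<And>x. norm (T x - scaleR l x) \<le> \<eta> * norm x \<Longrightarrow> norm (S x - scaleR (f l) x) \<le> e * norm x"
proof -
  obtain p where p1: "\<And>t. 0 \<le> t \<Longrightarrow> t \<le> onorm T \<Longrightarrow> \<bar>poly p t - f t\<bar> \<le> e / 3"
    and p2: "\<And>x. norm (op_poly p T x - S x) \<le> e / 3 * norm x"
    by (rule functional_calculus_poly_approx[OF S, of "e/3"]) (use e in auto)
  obtain C where C0: "0 \<le> C"
    and C: "\<And>x. norm (op_poly p T x - scaleR (poly p l) x) \<le> C * norm (T x - scaleR l x)"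
    using op_poly_approx_eigenvector[OF bT, of p l] by blast
  show ?thesis
  proof (rule that[of "e / 3 / (C + 1)"])
    show "0 < e / 3 / (C + 1)" using e C0 by simp
    fix x assume hx: "norm (T x - scaleR l x) \<le> e / 3 / (C + 1) * norm x"
    have "norm (op_poly p T x - scaleR (poly p l) x) \<le> C * (e / 3 / (C + 1) * norm x)"
      using C[of x] mult_left_mono[OF hx C0] by linarith
    also have "\<dots> = (C / (C + 1)) * (e / 3 * norm x)" by simp
    also have "\<dots> \<le> 1 * (e / 3 * norm x)" using C0 e by (intro mult_right_mono) simp_all
    finally have "norm (op_poly p T x - scaleR (poly p l) x) \<le> e / 3 * norm x" by simp
    moreover have "norm (scaleR (poly p l) x - scaleR (f l) x) \<le> e / 3 * norm x"
      using mult_right_mono[OF p1[OF l] norm_ge_zero] by (simp add: scaleR_diff_left[symmetric])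
    ultimately have "norm (op_poly p T x - scaleR (f l) x) \<le> e / 3 * norm x + e / 3 * norm x"
      by (rule norm_diff_triangle_le)
    moreover have "norm (S x - op_poly p T x) \<le> e / 3 * norm x"
      using p2[of x] by (simp add: norm_minus_commute)
    ultimately have "norm (S x - scaleR (f l) x) \<le> e / 3 * norm x + (e / 3 * norm x + e / 3 * norm x)"
      by (metis add.commute norm_diff_triangle_le)
    then show "norm (S x - scaleR (f l) x) \<le> e * norm x" by simp
  qed
qed

lemma functional_calculus_square:
  assumes S: "functional_calculus T f S" and fsq: "\<And>t. 0 \<le> t \<Longrightarrow> t \<le> onorm T \<Longrightarrow> f t * f t = t"
  shows "S (S x) = T x"
proof -
  have bS: "bounded_clinear_op S" using S by (simp add: functional_calculus_def)
  obtain F where F: "\<And>t. 0 \<le> t \<Longrightarrow> t \<le> onorm T \<Longrightarrow> \<bar>f t\<bar> \<le> F"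
    using continuous_on_interval_bounded[OF cf] by blast
  have "norm (S (S x) - T x) \<le> 0"
  proof (rule nonpos_if_le_small_mult[where C="(2 * onorm S + 2 * F + 2) * norm x"])
    fix e :: real assume e: "0 < e" "e < 1"
    obtain p where p1: "\<And>t. 0 \<le> t \<Longrightarrow> t \<le> onorm T \<Longrightarrow> \<bar>poly p t - f t\<bar> \<le> e"
      and p2: "\<And>x. norm (S x - op_poly p T x) \<le> e * norm x"
      using functional_calculus_poly_approx[OF S e(1)] by (metis norm_minus_commute)
    define P where "P = op_poly p T"
    \<comment> \<open>\<open>S\<^sup>2 - T = S(S - P) + (S - P)P + (P\<^sup>2 - T)\<close>\<close>
    have "norm (P x) \<le> norm (S x) + norm (S x - P x)"
      by (metis norm_minus_commute norm_triangle_sub)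
    also have "\<dots> \<le> (onorm S + 1) * norm x"
      using bounded_clinear_op_norm_le[OF bS, of x] p2[of x] e mult_right_mono[of e 1 "norm x"]
      by (simp add: P_def algebra_simps)
    finally have Px: "norm (P x) \<le> (onorm S + 1) * norm x" .
    have d1: "norm (S (S x) - S (P x)) \<le> onorm S * (e * norm x)"
      using bounded_clinear_op_norm_le[OF bS, of "S x - P x"] p2[of x]
        mult_left_mono[OF _ bounded_clinear_op_onorm_nonneg[OF bS]]
      by (simp add: P_def bounded_clinear_op_map_diff[OF bS]) (meson order_trans)
    have "norm (S (P x) - P (P x)) \<le> e * norm (P x)"
      using p2[of "P x"] by (simp add: P_def)
    then have d2: "norm (S (P x) - P (P x)) \<le> e * ((onorm S + 1) * norm x)"
      using mult_left_mono[OF Px, of e] e by linarith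
    have d3: "norm (P (P x) - T x) \<le> e * (2 * F + 1) * norm x"
      unfolding P_def using p1 e by (intro norm_op_poly_square_sub_le[OF pT fsq F]) auto
    from d1 norm_diff_triangle_le[OF d2 d3] have "norm (S (S x) - T x) \<le>
        onorm S * (e * norm x) + (e * ((onorm S + 1) * norm x) + e * (2 * F + 1) * norm x)"
      by (rule norm_diff_triangle_le)
    then show "norm (S (S x) - T x) \<le> e * ((2 * onorm S + 2 * F + 2) * norm x)"
      by (simp add: algebra_simps)
  qed
  then show ?thesis by simp
qed

end

section \<open>Real powers and the square root\<close>

lemma opow_eq_The: "opow T r = The (functional_calculus T (\<lambda>t. t powr r))"
  by (simp add: opow_def functional_calculus_def[abs_def])

lemma continuous_on_powr_interval: "0 < r \<Longrightarrow> continuous_on {0..M} (\<lambda>t::real. t powr r)"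
  by (rule continuous_on_powr') (auto intro: continuous_intros)

context
  fixes T :: "'a::chilbert_space \<Rightarrow> 'a" and r :: real
  assumes pT: "positive_op T" and r: "0 < r"
begin

lemma opow_functional_calculus: "functional_calculus T (\<lambda>t. t powr r) (opow T r)"
  unfolding opow_eq_The by (rule functional_calculus_The[OF pT continuous_on_powr_interval[OF r]])

lemma positive_op_opow: "positive_op (opow T r)"
  unfolding positive_op_def
proof (intro conjI allI)
  show "bounded_clinear_op (opow T r)"
    using opow_functional_calculus by (simp add: functional_calculus_def)
  show "selfadjoint (opow T r)"
    by (rule functional_calculus_selfadjoint[OF pT continuous_on_powr_interval[OF r] opow_functional_calculus])
  show "0 \<le> Re (cinner (opow T r x) x)" for x
    by (rule functional_calculus_nonneg[OF pT continuous_on_powr_interval[OF r] opow_functional_calculus]) simp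
qed

lemma opow_approx_eigenvector:
  assumes "0 \<le> l" "l \<le> onorm T" "0 < e"
  obtains \<eta> where "0 < \<eta>" "\<And>x. norm (T x - scaleR l x) \<le> \<eta> * norm x \<Longrightarrow>
    norm (opow T r x - scaleR (l powr r) x) \<le> e * norm x"
  using functional_calculus_approx_eigenvector[OF pT continuous_on_powr_interval[OF r] opow_functional_calculus assms]
  by blast

end

lemma opow_half_square:
  fixes T :: "'a::chilbert_space \<Rightarrow> 'a"
  assumes pT: "positive_op T"
  shows "opow T (1/2) (opow T (1/2) x) = T x"
proof (rule functional_calculus_square[OF pT continuous_on_powr_interval opow_functional_calculus[OF pT]])
  show "t powr (1/2) * t powr (1/2) = t" if "0 \<le> t" for t :: real
    using that by (simp add: powr_half_sqrt)
qed simp_all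

lemma norm_opow_half_sq:
  fixes T :: "'a::chilbert_space \<Rightarrow> 'a"
  assumes pT: "positive_op T"
  shows "(norm (opow T (1/2) x))\<^sup>2 = Re (cinner (T x) x)"
  using positive_op_norm_sq[OF positive_op_opow[OF pT]] by (simp add: opow_half_square[OF pT])

lemma positive_op_norm_sq_le:
  fixes R :: "'a::chilbert_space \<Rightarrow> 'a"
  assumes pR: "positive_op R"
  shows "(norm (R x))\<^sup>2 \<le> onorm R * Re (cinner (R x) x)"
proof -
  define S where "S = opow R (1/2)"
  have bR: "bounded_clinear_op R" using pR by (simp add: positive_op_def)
  have "(norm (R x))\<^sup>2 = (norm (S (S x)))\<^sup>2" by (simp add: S_def opow_half_square[OF pR])
  also have "\<dots> = Re (cinner (R (S x)) (S x))" unfolding S_def by (rule norm_opow_half_sq[OF pR])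
  also have "\<dots> \<le> onorm R * (norm (S x))\<^sup>2" by (rule quadratic_form_le_onorm[OF bR])
  also have "(norm (S x))\<^sup>2 = Re (cinner (R x) x)" unfolding S_def by (rule norm_opow_half_sq[OF pR])
  finally show ?thesis .
qed

section \<open>Monotonicity of the square root\<close>

lemma quadratic_form_Inf_approx:
  fixes Z :: "'a::complex_inner \<Rightarrow> 'a"
  assumes bZ: "bounded_clinear_op Z" and neg: "Re (cinner (Z x0) x0) < 0"
  obtains m where "m < 0" "\<And>x. m * (norm x)\<^sup>2 \<le> Re (cinner (Z x) x)"
    "\<And>\<eta>. 0 < \<eta> \<Longrightarrow> \<exists>x. norm x = 1 \<and> Re (cinner (Z x) x) < m + \<eta>"
proof -
  define U where "U = {Re (cinner (Z x) x) | x. norm x = 1}"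
  have "x0 \<noteq> 0" using neg by auto
  then obtain u0 where u0: "norm u0 = 1" "x0 = scaleR (norm x0) u0"
    by (rule bounded_clinear_op_unit_scale[OF bZ])
  have "Re (cinner (Z x0) x0) = (norm x0)\<^sup>2 * Re (cinner (Z u0) u0)"
    by (subst (1 2) u0(2)) (rule quadratic_form_scaleR[OF bZ])
  with neg have u0neg: "Re (cinner (Z u0) u0) < 0" by (simp add: mult_less_0_iff)
  have "- onorm Z \<le> Re (cinner (Z x) x)" if "norm x = 1" for x
    using abs_Re_cinner_le_sq[OF bounded_clinear_op_norm_le[OF bZ, of x]] that by simp
  then have bddU: "bdd_below U" unfolding U_def by (intro bdd_belowI[of _ "- onorm Z"]) auto
  have uU: "Re (cinner (Z u0) u0) \<in> U" using u0 by (auto simp: U_def)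
  define m where "m = Inf U"
  have mle: "m \<le> v" if "v \<in> U" for v unfolding m_def by (rule cInf_lower[OF that bddU])
  show ?thesis
  proof (rule that)
    show "m < 0" using mle[OF uU] u0neg by linarith
    show "m * (norm x)\<^sup>2 \<le> Re (cinner (Z x) x)" for x
    proof (cases "x = 0")
      case False
      then obtain u where u: "norm u = 1" "x = scaleR (norm x) u"
        by (rule bounded_clinear_op_unit_scale[OF bZ])
      have "m \<le> Re (cinner (Z u) u)" using u by (intro mle) (auto simp: U_def)
      then have "m * (norm x)\<^sup>2 \<le> Re (cinner (Z u) u) * (norm x)\<^sup>2"
        by (simp add: mult_right_mono)
      also have "\<dots> = (norm x)\<^sup>2 * Re (cinner (Z u) u)" by (rule mult.commute)
      also have "\<dots> = Re (cinner (Z x) x)"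
        using quadratic_form_scaleR[OF bZ, of "norm x" u] by (simp flip: u(2))
      finally show ?thesis .
    qed (simp add: bounded_clinear_op_map_zero[OF bZ])
    show "\<exists>x. norm x = 1 \<and> Re (cinner (Z x) x) < m + \<eta>" if "0 < \<eta>" for \<eta>
      using cInf_lessD[of U "m + \<eta>"] uU that unfolding m_def by (auto simp: U_def)
  qed
qed

lemma selfadjoint_diff:
  "selfadjoint X \<Longrightarrow> selfadjoint Y \<Longrightarrow> selfadjoint (\<lambda>x. X x - Y x)"
  by (simp add: selfadjoint_def cinner_diff_left cinner_diff_right)

lemma positive_op_shift:
  fixes Z :: "'a::complex_inner \<Rightarrow> 'a"
  assumes "bounded_clinear_op Z" "selfadjoint Z" "\<And>x. m * (norm x)\<^sup>2 \<le> Re (cinner (Z x) x)"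
  shows "positive_op (\<lambda>x. Z x - scaleR m x)"
  unfolding positive_op_def
proof (intro conjI allI)
  show "bounded_clinear_op (\<lambda>x. Z x - scaleR m x)"
    by (intro bounded_clinear_op_diff assms(1) bounded_clinear_op_scaleR[OF bounded_clinear_op_ident])
  show "selfadjoint (\<lambda>x. Z x - scaleR m x)"
    using assms(2) by (simp add: selfadjoint_def cinner_diff_left cinner_diff_right
        cinner_scaleR_left cinner_scaleR_right)
  show "0 \<le> Re (cinner (Z x - scaleR m x) x)" for x
    using assms(3)[of x] by (simp add: cinner_diff_left cinner_scaleR_left norm_sq_cinner)
qed

lemma mult_lt_half_sq_if_sq_le:
  fixes w r K \<eta> \<mu> :: real
  assumes "0 \<le> w" "0 \<le> r" "0 \<le> K" "0 < \<mu>" "r\<^sup>2 \<le> K * \<eta>" "\<eta> \<le> \<mu> ^ 4 / (4 * (w\<^sup>2 * K + 1))"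
  shows "w * r < \<mu>\<^sup>2 / 2"
proof -
  have den: "0 < 4 * (w\<^sup>2 * K + 1)" using assms(3) by (simp add: add_nonneg_pos)
  have "(w * r)\<^sup>2 = w\<^sup>2 * r\<^sup>2" by (simp add: power_mult_distrib)
  also have "\<dots> \<le> w\<^sup>2 * (K * \<eta>)" using assms(5) by (intro mult_left_mono) simp_all
  also have "\<dots> \<le> w\<^sup>2 * (K * (\<mu> ^ 4 / (4 * (w\<^sup>2 * K + 1))))"
    using assms(3,6) by (intro mult_left_mono) simp_all
  also have "\<dots> < (\<mu>\<^sup>2 / 2)\<^sup>2"
    using assms(4) den by (simp add: field_simps power2_eq_square power4_eq_xxxx)
  finally have "(w * r)\<^sup>2 < (\<mu>\<^sup>2 / 2)\<^sup>2" .
  then show ?thesis by (rule power_less_imp_less_base) simp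
qed

text \<open>Loewner--Heinz for the exponent 1/2, in the form: \<open>Y\<^sup>2 \<le> X\<^sup>2\<close> implies \<open>Y \<le> X\<close>.\<close>
lemma quadratic_form_le_if_norm_le:
  fixes X Y :: "'a::chilbert_space \<Rightarrow> 'a"
  assumes pX: "positive_op X" and pY: "positive_op Y"
    and h: "\<And>x. (norm (Y x))\<^sup>2 \<le> (norm (X x))\<^sup>2"
  shows "Re (cinner (Y x0) x0) \<le> Re (cinner (X x0) x0)"
proof (rule ccontr)
  have bX: "bounded_clinear_op X" and bY: "bounded_clinear_op Y" and X0: "0 \<le> Re (cinner (X x) x)" for x
    using pX pY by (simp_all add: positive_op_def)
  define Z where "Z x = X x - Y x" for x
  have bZ: "bounded_clinear_op Z" unfolding Z_def[abs_def] by (rule bounded_clinear_op_diff[OF bX bY])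
  have ReZ: "Re (cinner (Z x) x) = Re (cinner (X x) x) - Re (cinner (Y x) x)" for x
    by (simp add: Z_def cinner_diff_left)
  assume "\<not> ?thesis"
  then obtain m where m0: "m < 0" and mZ: "\<And>x. m * (norm x)\<^sup>2 \<le> Re (cinner (Z x) x)"
    and near: "\<And>\<eta>. 0 < \<eta> \<Longrightarrow> \<exists>x. norm x = 1 \<and> Re (cinner (Z x) x) < m + \<eta>"
    using quadratic_form_Inf_approx[OF bZ, of x0] by (auto simp: ReZ)
  \<comment> \<open>\<open>R = X - Y - m\<close> is positive and nearly annihilates near-minimizers \<open>x\<close> of the quadratic form
    of \<open>X - Y\<close>; but \<open>Re \<langle>X x + Y x, (X - Y) x\<rangle> = \<parallel>X x\<parallel>\<^sup>2 - \<parallel>Y x\<parallel>\<^sup>2 \<ge> 0\<close> keeps \<open>R x\<close> away from 0\<close>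
  define R where "R x = Z x - scaleR m x" for x
  have pR: "positive_op R" unfolding R_def Z_def
    using pX pY mZ by (intro positive_op_shift bounded_clinear_op_diff selfadjoint_diff)
      (auto simp: positive_op_def Z_def)
  define \<mu> where "\<mu> = - m"
  have mu0: "0 < \<mu>" using m0 by (simp add: \<mu>_def)
  define K where "K = onorm R"
  have K0: "0 \<le> K" unfolding K_def using pR by (simp add: positive_op_def bounded_clinear_op_onorm_nonneg)
  define w where "w = onorm X + onorm Y"
  define \<eta> where "\<eta> = min (\<mu> / 2) (\<mu> ^ 4 / (4 * (w\<^sup>2 * K + 1)))"
  have eta0: "0 < \<eta>" using mu0 K0 by (simp add: \<eta>_def add_nonneg_pos)
  have eta1: "\<eta> \<le> \<mu> / 2" unfolding \<eta>_def by (rule min.cobounded1)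
  have eta2: "\<eta> \<le> \<mu> ^ 4 / (4 * (w\<^sup>2 * K + 1))" unfolding \<eta>_def by (rule min.cobounded2)
  obtain x where x: "norm x = 1" "Re (cinner (Z x) x) < m + \<eta>" using near[OF eta0] by blast
  have "(norm (R x))\<^sup>2 \<le> K * Re (cinner (R x) x)" unfolding K_def by (rule positive_op_norm_sq_le[OF pR])
  also have "\<dots> \<le> K * \<eta>"
    using x K0 by (intro mult_left_mono) (simp_all add: R_def cinner_diff_left cinner_scaleR_left flip: norm_sq_cinner)
  finally have Rx2: "(norm (R x))\<^sup>2 \<le> K * \<eta>" .
  define W where "W = X x + Y x"
  have "0 \<le> Re (cinner W (Z x))" using h[of x] by (simp add: W_def Z_def Re_cinner_add_diff)
  also have "\<dots> = Re (cinner W (R x)) - \<mu> * Re (cinner W x)"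
    by (simp add: R_def \<mu>_def cinner_diff_right cinner_scaleR_right)
  also have "Re (cinner W (R x)) \<le> w * norm (R x)"
  proof -
    have "norm W \<le> w"
      using norm_triangle_ineq[of "X x" "Y x"] bounded_clinear_op_norm_le[OF bX, of x]
        bounded_clinear_op_norm_le[OF bY, of x] x(1) by (simp add: W_def w_def)
    then show ?thesis using abs_Re_cinner_le[of W "R x"] mult_right_mono[of "norm W" w "norm (R x)"] by simp
  qed
  finally have muW: "\<mu> * Re (cinner W x) \<le> w * norm (R x)" by simp
  have "\<mu> / 2 < Re (cinner W x)"
    using x(2) ReZ[of x] X0[of x] eta1 by (simp add: W_def cinner_add_left \<mu>_def)
  then have "\<mu> * (\<mu> / 2) < \<mu> * Re (cinner W x)" using mu0 by simp
  with muW have "\<mu>\<^sup>2 / 2 < w * norm (R x)" by (simp add: power2_eq_square)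
  moreover have "w * norm (R x) < \<mu>\<^sup>2 / 2"
    using Rx2 eta2 mu0 K0 by (intro mult_lt_half_sq_if_sq_le) (simp_all add: w_def add_nonneg_nonneg
        bounded_clinear_op_onorm_nonneg[OF bX] bounded_clinear_op_onorm_nonneg[OF bY])
  ultimately show False by simp
qed

section \<open>Joint approximate eigenvalues\<close>

definition joint_approx_eigenvalue :: "real \<Rightarrow> ('a::complex_inner \<Rightarrow> 'a) \<Rightarrow> ('a \<Rightarrow> 'a) \<Rightarrow> bool" where
  "joint_approx_eigenvalue c U V \<longleftrightarrow>
     (\<forall>e>0. \<exists>x. norm x = 1 \<and> norm (U x - scaleR c x) \<le> e \<and> norm (V x - scaleR c x) \<le> e)"

lemma joint_approx_eigenvalue_commute:
  "joint_approx_eigenvalue c U V \<Longrightarrow> joint_approx_eigenvalue c V U"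
  unfolding joint_approx_eigenvalue_def by blast

lemma joint_approx_eigenvalue_le_onorm:
  fixes U :: "'a::complex_inner \<Rightarrow> 'a"
  assumes bU: "bounded_clinear_op U" and c: "0 \<le> c" and j: "joint_approx_eigenvalue c U V"
  shows "c \<le> onorm U"
proof (rule field_le_epsilon)
  fix e :: real assume "0 < e"
  with j obtain x where x: "norm x = 1" "norm (U x - scaleR c x) \<le> e"
    unfolding joint_approx_eigenvalue_def by blast
  have "c = norm (scaleR c x)" using x(1) c by simp
  also have "\<dots> \<le> norm (U x) + norm (scaleR c x - U x)" by (rule norm_triangle_sub)
  also have "\<dots> \<le> onorm U + e"
    using bounded_clinear_op_norm_le[OF bU, of x] x by (simp add: norm_minus_commute)
  finally show "c \<le> onorm U + e" .
qed

lemma joint_approx_eigenvalue_onorm_add: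
  fixes U V :: "'a::complex_inner \<Rightarrow> 'a"
  assumes bU: "bounded_clinear_op U" and bV: "bounded_clinear_op V" and c: "0 \<le> c"
    and j: "joint_approx_eigenvalue c U V"
  shows "2 * c \<le> onorm (\<lambda>x. U x + V x)"
proof (rule field_le_epsilon)
  fix e :: real assume "0 < e"
  with j obtain x where x: "norm x = 1" "norm (U x - scaleR c x) \<le> e / 2" "norm (V x - scaleR c x) \<le> e / 2"
    unfolding joint_approx_eigenvalue_def by (meson half_gt_zero)
  have "2 * c = norm (scaleR (2 * c) x)" using x(1) c by simp
  also have "\<dots> \<le> norm (U x + V x) + norm (scaleR (2 * c) x - (U x + V x))" by (rule norm_triangle_sub)
  also have "norm (scaleR (2 * c) x - (U x + V x)) \<le> norm (U x - scaleR c x) + norm (V x - scaleR c x)"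
  proof -
    have "scaleR (2 * c) x = scaleR c x + scaleR c x" by (metis mult_2 scaleR_left_distrib)
    then have "scaleR (2 * c) x - (U x + V x) = - ((U x - scaleR c x) + (V x - scaleR c x))"
      by (simp add: algebra_simps)
    then show ?thesis by (simp only: norm_minus_cancel norm_triangle_ineq)
  qed
  also have "\<dots> \<le> e" using x by simp
  also have "norm (U x + V x) \<le> onorm (\<lambda>x. U x + V x)"
    using bounded_clinear_op_norm_le[OF bounded_clinear_op_add[OF bU bV], of x] x(1) by simp
  finally show "2 * c \<le> onorm (\<lambda>x. U x + V x) + e" by simp
qed

lemma joint_approx_eigenvalue_opow:
  fixes T1 T2 :: "'a::chilbert_space \<Rightarrow> 'a"
  assumes p1: "positive_op T1" and p2: "positive_op T2" and r: "0 < r" and l: "0 \<le> l"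
    and j: "joint_approx_eigenvalue l T1 T2"
  shows "joint_approx_eigenvalue (l powr r) (opow T1 r) (opow T2 r)"
  unfolding joint_approx_eigenvalue_def
proof (intro allI impI)
  fix e :: real assume e: "0 < e"
  have "l \<le> onorm T1" "l \<le> onorm T2"
    using joint_approx_eigenvalue_le_onorm[OF _ l] j joint_approx_eigenvalue_commute[OF j] p1 p2
    by (auto simp: positive_op_def)
  then obtain \<eta>1 \<eta>2 where e1: "\<eta>1 > 0"
    and h1: "\<And>x. norm (T1 x - scaleR l x) \<le> \<eta>1 * norm x \<Longrightarrow> norm (opow T1 r x - scaleR (l powr r) x) \<le> e * norm x"
    and e2: "\<eta>2 > 0"
    and h2: "\<And>x. norm (T2 x - scaleR l x) \<le> \<eta>2 * norm x \<Longrightarrow> norm (opow T2 r x - scaleR (l powr r) x) \<le> e * norm x"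
    using opow_approx_eigenvector[OF p1 r l _ e] opow_approx_eigenvector[OF p2 r l _ e] by metis
  have "0 < min \<eta>1 \<eta>2" using e1 e2 by simp
  with j obtain x where "norm x = 1" "norm (T1 x - scaleR l x) \<le> min \<eta>1 \<eta>2"
    "norm (T2 x - scaleR l x) \<le> min \<eta>1 \<eta>2"
    unfolding joint_approx_eigenvalue_def by blast
  with h1[of x] h2[of x] show "\<exists>x. norm x = 1 \<and> norm (opow T1 r x - scaleR (l powr r) x) \<le> e
      \<and> norm (opow T2 r x - scaleR (l powr r) x) \<le> e" by auto
qed

section \<open>Hyponormal operators\<close>

definition xi_quotients :: "('a::complex_inner \<Rightarrow> 'a) \<Rightarrow> real set" where
  "xi_quotients A = {Re (cinner (absop A x - absop (adj A) x) x) / Re (cinner (absop A x + absop (adj A) x) x) | x.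
     norm x = 1 \<and> Re (cinner (absop A x + absop (adj A) x) x) \<noteq> 0}"

lemma xi_abs_eq_Inf: "xi_abs A = Inf (xi_quotients A)"
  by (simp add: xi_abs_def xi_quotients_def)

context
  fixes A :: "'a::chilbert_space \<Rightarrow> 'a"
  assumes bA: "bounded_clinear_op A"
begin

lemma absop_adj_eq: "absop (adj A) = opow (\<lambda>x. A (adj A x)) (1/2)"
  by (simp add: absop_def adj_adj[OF bA])

lemma positive_op_absop: "positive_op (absop A)" "positive_op (absop (adj A))"
  using positive_op_opow[OF positive_op_adj_comp[OF bA]] positive_op_opow[OF positive_op_comp_adj[OF bA]]
  by (simp_all add: absop_def adj_adj[OF bA])

lemma norm_absop: "norm (absop A x) = norm (A x)"
  using norm_opow_half_sq[OF positive_op_adj_comp[OF bA], of x]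
  by (simp add: absop_def quadratic_form_adj_comp[OF bA] power2_eq_iff_nonneg)

lemma norm_absop_adj: "norm (absop (adj A) x) = norm (adj A x)"
  using norm_opow_half_sq[OF positive_op_comp_adj[OF bA], of x]
  by (simp add: absop_adj_eq quadratic_form_comp_adj[OF bA] power2_eq_iff_nonneg)

end

context
  fixes A :: "'a::chilbert_space \<Rightarrow> 'a"
  assumes bA: "bounded_clinear_op A" and hA: "hyponormal A"
begin

lemma hyponormal_norm_adj_le: "norm (adj A x) \<le> norm (A x)"
proof -
  have "0 \<le> Re (cinner (adj A (A x) - A (adj A x)) x)"
    using hA by (simp add: hyponormal_def pos_op_def)
  then have "(norm (adj A x))\<^sup>2 \<le> (norm (A x))\<^sup>2"
    by (simp add: cinner_diff_left quadratic_form_adj_comp[OF bA] quadratic_form_comp_adj[OF bA])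
  then show ?thesis by (simp add: power2_le_iff_abs_le)
qed

text \<open>A unit vector almost norming \<open>A\<^sup>*\<close> almost norms \<open>A\<close> as well.\<close>
lemma hyponormal_joint_approx_eigenvalue:
  assumes a0: "0 < onorm A"
  shows "joint_approx_eigenvalue ((onorm A)\<^sup>2) (\<lambda>x. adj A (A x)) (\<lambda>x. A (adj A x))"
  unfolding joint_approx_eigenvalue_def
proof (intro allI impI)
  fix \<eta> :: real assume \<eta>: "0 < \<eta>"
  define a where "a = onorm A"
  have bA': "bounded_clinear_op (adj A)" and onA: "onorm (adj A) = a"
    using bounded_clinear_op_adj[OF bA] onorm_adj[OF bA] by (simp_all add: a_def)
  define t where "t = \<eta>\<^sup>2 / (2 * a ^ 3 + 1)"
  have den: "0 < 2 * a ^ 3 + 1" using a0 by (simp add: a_def add_pos_pos)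
  have t0: "0 < t" using \<eta> den by (simp add: t_def)
  have small: "2 * a ^ 3 * t \<le> \<eta>\<^sup>2" using \<eta> den by (simp add: t_def field_simps)
  have "0 \<le> max 0 (a - t)" "max 0 (a - t) < onorm (adj A)" using onA a0 t0 by (auto simp: a_def)
  then obtain x where x: "norm x = 1" "max 0 (a - t) < norm (adj A x)"
    by (rule bounded_clinear_op_almost_norming[OF bA'])
  have Ax: "norm (adj A x) \<le> norm (A x)" "norm (A x) \<le> a" "norm (adj A x) \<le> a"
    using hyponormal_norm_adj_le bounded_clinear_op_norm_le[OF bA, of x] norm_adj_le[OF bA, of x] x(1)
    by (simp_all add: a_def)
  have d1: "(norm (adj A (A x) - scaleR (a\<^sup>2) x))\<^sup>2 \<le> 2 * a ^ 3 * t"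
    by (rule norm_sub_sq_scaleR_le[OF x(1), where g = "norm (A x)"])
      (use x(2) Ax t0 norm_adj_le[OF bA, of "A x"] in \<open>auto simp: quadratic_form_adj_comp[OF bA] a_def\<close>)
  have d2: "(norm (A (adj A x) - scaleR (a\<^sup>2) x))\<^sup>2 \<le> 2 * a ^ 3 * t"
    by (rule norm_sub_sq_scaleR_le[OF x(1), where g = "norm (adj A x)"])
      (use x(2) Ax t0 norm_adj_le[OF bA', of "adj A x"] onA in
        \<open>auto simp: quadratic_form_comp_adj[OF bA] adj_adj[OF bA]\<close>)
  have "norm (adj A (A x) - scaleR (a\<^sup>2) x) \<le> \<eta>" "norm (A (adj A x) - scaleR (a\<^sup>2) x) \<le> \<eta>"
    using power2_le_imp_le[OF order_trans[OF d1 small]] power2_le_imp_le[OF order_trans[OF d2 small]] \<eta>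
    by simp_all
  with x(1) show "\<exists>x. norm x = 1 \<and> norm (adj A (A x) - scaleR ((onorm A)\<^sup>2) x) \<le> \<eta>
      \<and> norm (A (adj A x) - scaleR ((onorm A)\<^sup>2) x) \<le> \<eta>"
    by (auto simp: a_def)
qed

lemma hyponormal_abs_joint_approx_eigenvalue:
  assumes "0 < onorm A"
  shows "joint_approx_eigenvalue (onorm A) (absop A) (absop (adj A))"
  using joint_approx_eigenvalue_opow[OF positive_op_adj_comp[OF bA] positive_op_comp_adj[OF bA] _ _
      hyponormal_joint_approx_eigenvalue[OF assms], of "1/2"]
  by (simp add: absop_def adj_adj[OF bA] powr_half_sqrt bounded_clinear_op_onorm_nonneg[OF bA])

lemma hyponormal_quadratic_absop_adj_le: "Re (cinner (absop (adj A) x) x) \<le> Re (cinner (absop A x) x)"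
  using hyponormal_norm_adj_le
  by (intro quadratic_form_le_if_norm_le positive_op_absop[OF bA])
    (simp add: norm_absop[OF bA] norm_absop_adj[OF bA] power_mono)

lemma xi_quotients_nonneg: "v \<in> xi_quotients A \<Longrightarrow> 0 \<le> v"
  using hyponormal_quadratic_absop_adj_le positive_op_absop[OF bA]
  by (auto simp: xi_quotients_def cinner_diff_left cinner_add_left positive_op_def intro!: divide_nonneg_nonneg)

lemma xi_quotients_small:
  assumes a0: "0 < onorm A" and e: "0 < e" "e \<le> onorm A / 2"
  shows "\<exists>v\<in>xi_quotients A. v \<le> 2 * e / onorm A"
proof -
  define a where "a = onorm A"
  obtain x where x: "norm x = 1" "norm (absop A x - scaleR a x) \<le> e"
    "norm (absop (adj A) x - scaleR a x) \<le> e"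
    using hyponormal_abs_joint_approx_eigenvalue[OF a0] e(1)
    unfolding joint_approx_eigenvalue_def a_def by blast
  define N where "N = Re (cinner (absop A x - absop (adj A) x) x)"
  define D where "D = Re (cinner (absop A x + absop (adj A) x) x)"
  have "N \<le> 2 * e" "a \<le> D"
    using Re_cinner_near_scaleR[OF x(1,2)] Re_cinner_near_scaleR[OF x(1,3)] e
    by (auto simp: N_def D_def cinner_diff_left cinner_add_left abs_le_iff a_def)
  moreover have "0 \<le> N" using hyponormal_quadratic_absop_adj_le[of x] by (simp add: N_def cinner_diff_left)
  moreover have "0 < a" using a0 by (simp add: a_def)
  ultimately have "N / D \<le> 2 * e / a" "N / D \<in> xi_quotients A"
    using x(1) by (auto simp: xi_quotients_def N_def D_def intro!: frac_le)
  then show ?thesis by (auto simp: a_def)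
qed

lemma xi_abs_hyponormal:
  assumes a0: "0 < onorm A"
  shows "xi_abs A = 0"
proof -
  define a where "a = onorm A"
  have "bdd_below (xi_quotients A)" using xi_quotients_nonneg by (intro bdd_belowI) blast
  have "0 \<le> Inf (xi_quotients A)"
    using xi_quotients_small[OF a0, of "a/2"] a0 xi_quotients_nonneg by (intro cInf_greatest) (auto simp: a_def)
  moreover have "Inf (xi_quotients A) \<le> 0"
  proof (rule field_le_epsilon)
    fix \<epsilon> :: real assume \<epsilon>: "0 < \<epsilon>"
    define e where "e = min (a / 2) (\<epsilon> * a / 2)"
    have e: "0 < e" "e \<le> a / 2" "e \<le> \<epsilon> * a / 2" using \<epsilon> a0 by (simp_all add: e_def a_def)
    then obtain v where v: "v \<in> xi_quotients A" "v \<le> 2 * e / a"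
      using xi_quotients_small[OF a0] by (auto simp: a_def)
    then have "Inf (xi_quotients A) \<le> 2 * e / a"
      using \<open>bdd_below (xi_quotients A)\<close> by (meson cInf_lower order_trans)
    also have "\<dots> \<le> \<epsilon>" using e(3) a0 by (simp add: a_def pos_divide_le_eq)
    finally show "Inf (xi_quotients A) \<le> 0 + \<epsilon>" by simp
  qed
  ultimately show ?thesis by (simp add: xi_abs_eq_Inf)
qed

lemma onorm_abs_powr_add_ge:
  assumes r: "0 < r"
  shows "2 * onorm A powr r \<le> onorm (\<lambda>x. opow (absop A) r x + opow (absop (adj A)) r x)"
proof -
  have p: "positive_op (opow (absop A) r)" "positive_op (opow (absop (adj A)) r)"
    using positive_op_opow[OF positive_op_absop(1)[OF bA] r] positive_op_opow[OF positive_op_absop(2)[OF bA] r] .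
  then have b: "bounded_clinear_op (opow (absop A) r)" "bounded_clinear_op (opow (absop (adj A)) r)"
    by (simp_all add: positive_op_def)
  show ?thesis
  proof (cases "onorm A = 0")
    case True
    then show ?thesis using bounded_clinear_op_onorm_nonneg[OF bounded_clinear_op_add[OF b]] by simp
  next
    case False
    then have "0 < onorm A" using bounded_clinear_op_onorm_nonneg[OF bA] by simp
    from joint_approx_eigenvalue_opow[OF positive_op_absop[OF bA] r _ hyponormal_abs_joint_approx_eigenvalue[OF this]]
    show ?thesis by (intro joint_approx_eigenvalue_onorm_add b) (simp_all add: bounded_clinear_op_onorm_nonneg[OF bA])
  qed
qed

lemma onorm_abs_add_ge: "2 * onorm A \<le> onorm (\<lambda>x. absop A x + absop (adj A) x)"
proof -
  have b: "bounded_clinear_op (absop A)" "bounded_clinear_op (absop (adj A))"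
    using positive_op_absop[OF bA] by (simp_all add: positive_op_def)
  show ?thesis
  proof (cases "onorm A = 0")
    case True
    then show ?thesis using bounded_clinear_op_onorm_nonneg[OF bounded_clinear_op_add[OF b]] by simp
  next
    case False
    then have "0 < onorm A" using bounded_clinear_op_onorm_nonneg[OF bA] by simp
    from hyponormal_abs_joint_approx_eigenvalue[OF this] show ?thesis
      by (intro joint_approx_eigenvalue_onorm_add b bounded_clinear_op_onorm_nonneg[OF bA])
  qed
qed

lemma onorm_adj_comp_add_ge: "2 * (onorm A)\<^sup>2 \<le> onorm (\<lambda>x. adj A (A x) + A (adj A x))"
proof -
  have b: "bounded_clinear_op (\<lambda>x. adj A (A x))" "bounded_clinear_op (\<lambda>x. A (adj A x))"
    using positive_op_adj_comp[OF bA] positive_op_comp_adj[OF bA] by (simp_all add: positive_op_def)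
  show ?thesis
  proof (cases "onorm A = 0")
    case True
    then show ?thesis using bounded_clinear_op_onorm_nonneg[OF bounded_clinear_op_add[OF b]] by simp
  next
    case False
    then have "0 < onorm A" using bounded_clinear_op_onorm_nonneg[OF bA] by simp
    from hyponormal_joint_approx_eigenvalue[OF this] show ?thesis
      by (intro joint_approx_eigenvalue_onorm_add b) simp
  qed
qed

end

section \<open>The numerical radius\<close>

lemma numrad_le_onorm:
  fixes A :: "'a::complex_inner \<Rightarrow> 'a"
  assumes bA: "bounded_clinear_op A"
  shows "numrad A \<le> onorm A" and "0 \<le> numrad A"
proof -
  have el: "v \<le> onorm A" if "v \<in> {0} \<union> {cmod (cinner (A x) x) | x. norm x = 1}" for v
    using that
  proof (elim UnE CollectE exE conjE singletonE)
    fix x assume "norm x = 1" "v = cmod (cinner (A x) x)"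
    then show "v \<le> onorm A"
      using cmod_cinner_le[of "A x" x] bounded_clinear_op_norm_le[OF bA, of x] by simp
  qed (simp add: bounded_clinear_op_onorm_nonneg[OF bA])
  show "numrad A \<le> onorm A" unfolding numrad_def by (rule cSup_least) (use el in auto)
  have "bdd_above ({0} \<union> {cmod (cinner (A x) x) | x. norm x = 1})"
    using el by (intro bdd_aboveI) blast
  then show "0 \<le> numrad A" unfolding numrad_def by (rule cSup_upper[rotated]) simp
qed

theorem corollary2p6:
  fixes A :: "'a::chilbert_space \<Rightarrow> 'a"
  assumes "bounded_clinear_op A" and "hyponormal A"
  shows "(\<forall>r::real. 1 \<le> r \<and> r \<le> 2 \<longrightarrow>
            numrad A powr r \<le>
              1 / (2 * (1 + (xi_abs A)\<^sup>2 / 8) powr r) *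
              onorm (\<lambda>x. opow (absop A) r x + opow (absop (adj A)) r x))
       \<and> numrad A \<le> 1 / (2 * (1 + (xi_abs A)\<^sup>2 / 8)) *
              onorm (\<lambda>x. absop A x + absop (adj A) x)
       \<and> (numrad A)\<^sup>2 \<le> 1 / (2 * (1 + (xi_abs A)\<^sup>2 / 8)\<^sup>2) *
              onorm (\<lambda>x. adj A (A x) + A (adj A x))"
proof -
  note nr = numrad_le_onorm[OF assms(1)]
  have powr: "numrad A powr r \<le> 1 / 2 * onorm (\<lambda>x. opow (absop A) r x + opow (absop (adj A)) r x)"
    if "0 < r" for r
    using powr_mono2[of r "numrad A" "onorm A"] onorm_abs_powr_add_ge[OF assms that] nr that by simp
  have one: "numrad A \<le> 1 / 2 * onorm (\<lambda>x. absop A x + absop (adj A) x)"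
    using onorm_abs_add_ge[OF assms] nr by simp
  have two: "(numrad A)\<^sup>2 \<le> 1 / 2 * onorm (\<lambda>x. adj A (A x) + A (adj A x))"
    using onorm_adj_comp_add_ge[OF assms] power_mono[OF nr(1) nr(2), of 2] by simp
  show ?thesis
  proof (cases "onorm A = 0")
    case True
    \<comment> \<open>then \<open>\<omega>(A) = 0\<close>, and the junk value of the infimum \<open>xi_abs A\<close> is irrelevant\<close>
    then have "numrad A = 0" using nr by simp
    then show ?thesis using powr one two by (simp add: add_pos_nonneg)
  next
    case False
    then have "xi_abs A = 0"
      using xi_abs_hyponormal[OF assms] bounded_clinear_op_onorm_nonneg[OF assms(1)] by simp
    then show ?thesis using powr one two by simp
  qed
qed

end
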